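(* Let $\lambda<1$, $K=\ln(n)/\ln(1/\lambda)+\omega(1)$ and $K=o(n/\ln(n))$, and let $\Gamma$ be the path on $K$ vertices. Let $C$ be the connected component of $G$ containing the longest path, and let $C'$ be obtained from $C$ by applying $\sqrt K$ times the peeling operation, which removes all degree-one nodes. Then under $\mathbb{P}_1$, with high probability both $C'$ and its intersection with the planted path have size $K\pm o(K)$.
   Context: Model: $\mathbb{P}_1$: $G=G_0\cup G'$ with $G_0\sim\mathcal G(n,\lambda/n)$ and $G'$ the image of the path $1-2-\cdots-K$ under a uniformly random injection $[K]\to[n]$ independent of $G_0$ (the planted path). With high probability means with probability $1-o(1)$ as $n\to\infty$. *)

theory Defs
  imports "HOL-Probability.Probability"
begin

text \<open>Graphs on the vertex set {0..<n}: an edge set is a set of 2-element subsets.\<close>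

definition all_pairs :: "nat \<Rightarrow> nat set set" where
  "all_pairs n = {e. \<exists>a b. a < n \<and> b < n \<and> a \<noteq> b \<and> e = {a, b}}"

definition erdos_renyi :: "nat \<Rightarrow> real \<Rightarrow> nat set set pmf" where
  "erdos_renyi n p =
     map_pmf (\<lambda>b. {e \<in> all_pairs n. b e})
       (Pi_pmf (all_pairs n) False (\<lambda>_. bernoulli_pmf p))"

definition random_injection :: "nat \<Rightarrow> nat \<Rightarrow> (nat \<Rightarrow> nat) pmf" where
  "random_injection n K =
     pmf_of_set {f. f \<in> {0..<K} \<rightarrow>\<^sub>E {0..<n} \<and> inj_on f {0..<K}}"

definition path_edges :: "nat \<Rightarrow> (nat \<Rightarrow> nat) \<Rightarrow> nat set set" where
  "path_edges K f = {{f i, f (Suc i)} | i. Suc i < K}"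

text \<open>Model P_1: pairs (G, V(planted path)) with G = G0 \<union> G'.\<close>
definition model_P1 :: "nat \<Rightarrow> real \<Rightarrow> nat \<Rightarrow> (nat set set \<times> nat set) pmf" where
  "model_P1 n lam K =
     map_pmf (\<lambda>(E0, f). (E0 \<union> path_edges K f, f ` {0..<K}))
       (pair_pmf (erdos_renyi n (lam / real n)) (random_injection n K))"

definition is_path :: "nat \<Rightarrow> nat set set \<Rightarrow> nat list \<Rightarrow> bool" where
  "is_path n E xs \<longleftrightarrow> xs \<noteq> [] \<and> distinct xs \<and> set xs \<subseteq> {0..<n} \<and>
     (\<forall>i. Suc i < length xs \<longrightarrow> {xs ! i, xs ! Suc i} \<in> E)"

definition is_longest_path :: "nat \<Rightarrow> nat set set \<Rightarrow> nat list \<Rightarrow> bool" where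
  "is_longest_path n E xs \<longleftrightarrow> is_path n E xs \<and>
     (\<forall>ys. is_path n E ys \<longrightarrow> length ys \<le> length xs)"

definition component :: "nat \<Rightarrow> nat set set \<Rightarrow> nat \<Rightarrow> nat set" where
  "component n E v = {u \<in> {0..<n}.
     (v, u) \<in> {(a, b). a < n \<and> b < n \<and> {a, b} \<in> E}\<^sup>*}"

definition peel :: "nat set set \<Rightarrow> nat set \<Rightarrow> nat set" where
  "peel E S = S - {v \<in> S. card {u \<in> S. u \<noteq> v \<and> {u, v} \<in> E} = 1}"

end

theory Submission
  imports Defs
begin

text \<open>Write \<open>W\<close> for the vertices of the planted path and \<open>C\<close> for its component. The
  Erdos--Renyi part is subcritical: it contains a path on \<open>K\<close> vertices with probability at most
  \<open>n \<lambda>\<^sup>K\<^sup>-\<^sup>1 \<rightarrow> 0\<close>, and without one every longest path meets the planted path, so it lies in \<open>C\<close>.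
  Peeling \<open>r = \<lfloor>\<surd>K\<rfloor>\<close> times erodes the planted path by at most \<open>r\<close> vertices at each end, hence
  \<open>|C' \<inter> W| \<ge> K - 2r\<close>. A vertex of \<open>C'\<close> outside \<open>W\<close> has a path back to \<open>W\<close> and, because it
  survives \<open>r\<close> peelings, a non-backtracking walk of length \<open>r\<close> away from it; together they give
  either a path of length \<open>d + r\<close> leaving \<open>W\<close> or a walk with one extra coincidence. Such
  structures number \<open>O(K \<lambda>\<^sup>r + K\<^sup>2/n)\<close> in expectation, which is \<open>o(K)\<close>, and Markov's inequality
  finishes the argument.\<close>

fun is_walk :: "'a set set \<Rightarrow> 'a list \<Rightarrow> bool" where
  "is_walk E (x # y # xs) \<longleftrightarrow> {x, y} \<in> E \<and> is_walk E (y # xs)"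
| "is_walk E _ \<longleftrightarrow> True"

fun non_backtracking :: "'a list \<Rightarrow> bool" where
  "non_backtracking (x # y # z # xs) \<longleftrightarrow> x \<noteq> z \<and> non_backtracking (y # z # xs)"
| "non_backtracking _ \<longleftrightarrow> True"

lemma is_walk_iff_nth:
  "is_walk E xs \<longleftrightarrow> (\<forall>i. Suc i < length xs \<longrightarrow> {xs ! i, xs ! Suc i} \<in> E)"
  by (induction E xs rule: is_walk.induct) (auto simp: nth_Cons split: nat.splits)

lemma non_backtracking_iff_nth:
  "non_backtracking xs \<longleftrightarrow> (\<forall>i. Suc (Suc i) < length xs \<longrightarrow> xs ! i \<noteq> xs ! Suc (Suc i))"
  by (induction xs rule: non_backtracking.induct) (auto simp: nth_Cons split: nat.splits)

lemma is_path_iff_is_walk: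
  "is_path n E xs \<longleftrightarrow> xs \<noteq> [] \<and> distinct xs \<and> set xs \<subseteq> {0..<n} \<and> is_walk E xs"
  by (simp add: is_path_def is_walk_iff_nth)

lemma is_walk_append:
  "is_walk E (xs @ y # ys) \<longleftrightarrow> is_walk E (xs @ [y]) \<and> is_walk E (y # ys)"
proof (induction xs)
  case Nil
  then show ?case by (cases ys) auto
next
  case (Cons a xs)
  then show ?case by (cases xs) auto
qed

lemma non_backtracking_append:
  assumes "non_backtracking (xs @ [y])" "non_backtracking (y # ys)"
    and "xs \<noteq> [] \<Longrightarrow> ys \<noteq> [] \<Longrightarrow> last xs \<noteq> hd ys"
  shows "non_backtracking (xs @ y # ys)"
  using assms
proof (induction xs)
  case (Cons a xs)
  show ?case
  proof (cases xs)
    case Nil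
    then show ?thesis using Cons.prems by (cases ys) auto
  next
    case (Cons b xs')
    then show ?thesis using Cons.prems Cons.IH by (cases xs') auto
  qed
qed simp

lemma distinct_non_backtracking: "distinct xs \<Longrightarrow> non_backtracking xs"
  by (induction xs rule: non_backtracking.induct) auto

lemma is_walk_rev: "is_walk E (rev xs) \<longleftrightarrow> is_walk E xs"
proof (induction xs)
  case (Cons x xs)
  show ?case
  proof (cases xs)
    case (Cons y ys)
    have "is_walk E (rev (x # xs)) \<longleftrightarrow> is_walk E (rev ys @ [y]) \<and> is_walk E [y, x]"
      using Cons is_walk_append[of E "rev ys" y "[x]"] by simp
    then show ?thesis
      using Cons \<open>is_walk E (rev xs) \<longleftrightarrow> is_walk E xs\<close> by (auto simp: insert_commute)
  qed simp
qed simp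

lemma is_walk_take: "is_walk E xs \<Longrightarrow> is_walk E (take k xs)"
  by (simp add: is_walk_iff_nth)

lemma peel_subset: "peel E S \<subseteq> S"
  unfolding peel_def by auto

lemma peel_iter_antimono: "i \<le> j \<Longrightarrow> (peel E ^^ j) S \<subseteq> (peel E ^^ i) S"
proof (induction j)
  case (Suc j)
  then show ?case
    using peel_subset[of E "(peel E ^^ j) S"] by (cases "i = Suc j") auto
qed simp

lemma peel_iter_subset: "(peel E ^^ j) S \<subseteq> S"
  using peel_iter_antimono[of 0 j] by simp

lemma peel_other_neighbour:
  assumes "x \<in> peel E S" "y \<in> S" "y \<noteq> x" "{y, x} \<in> E"
  obtains z where "z \<in> S" "z \<noteq> x" "{z, x} \<in> E" "z \<noteq> y"
proof (rule ccontr)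
  assume "\<not> thesis"
  then have "{u \<in> S. u \<noteq> x \<and> {u, x} \<in> E} = {y}"
    using assms(2-4) that by auto
  then show False using assms(1) unfolding peel_def by auto
qed

lemma two_neighbours_in_peel:
  assumes "finite S" "x \<in> S" "a \<in> S" "b \<in> S" "a \<noteq> b" "a \<noteq> x" "b \<noteq> x"
    and "{a, x} \<in> E" "{b, x} \<in> E"
  shows "x \<in> peel E S"
proof -
  have "card {a, b} \<le> card {u \<in> S. u \<noteq> x \<and> {u, x} \<in> E}"
    by (rule card_mono) (use assms in auto)
  then show ?thesis using assms(2,5) unfolding peel_def by auto
qed

lemma path_survives_peel:
  assumes "finite S" "distinct q" "is_walk E q" "set q \<subseteq> S" "q \<noteq> []"
    and "hd q \<in> peel E S" "last q \<in> peel E S"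
  shows "set q \<subseteq> peel E S"
proof
  fix x assume "x \<in> set q"
  then obtain i where i: "i < length q" "q ! i = x" by (auto simp: in_set_conv_nth)
  consider "i = 0" | "i = length q - 1" | "0 < i" "i < length q - 1"
    using i(1) by linarith
  then show "x \<in> peel E S"
  proof cases
    case 1
    then show ?thesis using i assms(5,6) by (simp add: hd_conv_nth)
  next
    case 2
    then show ?thesis using i assms(5,7) by (simp add: last_conv_nth)
  next
    case 3
    have "Suc (i - 1) = i" "Suc (i - 1) < length q" using 3 by auto
    then have e1: "{q ! (i - 1), q ! i} \<in> E"
      using assms(3) unfolding is_walk_iff_nth by metis
    have e2: "{q ! Suc i, q ! i} \<in> E"
      using assms(3) 3 unfolding is_walk_iff_nth by (auto simp: insert_commute)
    have ne: "q ! (i - 1) \<noteq> q ! Suc i" "q ! (i - 1) \<noteq> q ! i" "q ! Suc i \<noteq> q ! i"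
      using assms(2) i 3 by (auto simp: nth_eq_iff_index_eq)
    have mem: "q ! i \<in> S" "q ! (i - 1) \<in> S" "q ! Suc i \<in> S"
      using assms(4) i 3 by auto
    show ?thesis using two_neighbours_in_peel[OF assms(1) mem ne e1 e2] i(2) by simp
  qed
qed

lemma path_survives_peel_iter:
  assumes "finite S" "distinct q" "is_walk E q" "set q \<subseteq> S" "q \<noteq> []"
    and "hd q \<in> (peel E ^^ j) S" "last q \<in> (peel E ^^ j) S"
  shows "set q \<subseteq> (peel E ^^ j) S"
  using assms(6,7)
proof (induction j)
  case (Suc j)
  have "set q \<subseteq> (peel E ^^ j) S"
    using Suc peel_iter_antimono[of j "Suc j" E S] by auto
  moreover have "finite ((peel E ^^ j) S)"
    using assms(1) peel_iter_subset finite_subset by metis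
  ultimately show ?case using path_survives_peel[OF _ assms(2,3) _ assms(5)] Suc.prems by simp
qed (use assms(4) in simp)

lemma path_vertex_survives_peel_iter:
  assumes "finite S" "\<forall>i<K. f i \<in> S" "inj_on f {0..<K}"
    and "\<forall>i. Suc i < K \<longrightarrow> {f i, f (Suc i)} \<in> E"
  shows "j \<le> i \<Longrightarrow> i + j < K \<Longrightarrow> f i \<in> (peel E ^^ j) S"
proof (induction j arbitrary: i)
  case (Suc j)
  have fin: "finite ((peel E ^^ j) S)"
    using assms(1) peel_iter_subset finite_subset by metis
  have mem: "f i \<in> (peel E ^^ j) S" "f (i - 1) \<in> (peel E ^^ j) S" "f (Suc i) \<in> (peel E ^^ j) S"
    using Suc by auto
  have ne: "f (i - 1) \<noteq> f (Suc i)" "f (i - 1) \<noteq> f i" "f (Suc i) \<noteq> f i"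
    using Suc.prems inj_on_eq_iff[OF assms(3)] by auto
  have "Suc (i - 1) = i" "Suc (i - 1) < K" using Suc.prems by auto
  then have e1: "{f (i - 1), f i} \<in> E" using assms(4) by metis
  have e2: "{f (Suc i), f i} \<in> E" using assms(4) Suc.prems by (auto simp: insert_commute)
  show ?case using two_neighbours_in_peel[OF fin mem ne e1 e2] by simp
qed (use assms(2) in simp)

text \<open>Every vertex of a peeled set still has a second neighbour, so a walk entering it can be
  continued without backtracking, one layer of the peeling at a time.\<close>

lemma peel_iter_non_backtracking_walk:
  assumes "x \<in> (peel E ^^ k) S" "y \<in> (peel E ^^ (k - 1)) S" "{x, y} \<in> E" "x \<noteq> y"
  shows "\<exists>ws. length ws = k \<and> is_walk E (y # x # ws) \<and> non_backtracking (y # x # ws)"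
  using assms
proof (induction k arbitrary: x y)
  case 0
  then show ?case by (auto simp: insert_commute)
next
  case (Suc k)
  have "x \<in> peel E ((peel E ^^ k) S)" "y \<in> (peel E ^^ k) S" "y \<noteq> x" "{y, x} \<in> E"
    using Suc.prems by (simp_all add: insert_commute)
  then obtain z where z: "z \<in> (peel E ^^ k) S" "z \<noteq> x" "{z, x} \<in> E" "z \<noteq> y"
    by (rule peel_other_neighbour)
  have "k - 1 \<le> Suc k" by simp
  then have "x \<in> (peel E ^^ (k - 1)) S"
    using Suc.prems(1) peel_iter_antimono by blast
  then obtain ws where "length ws = k" "is_walk E (x # z # ws)" "non_backtracking (x # z # ws)"
    using Suc.IH[OF z(1) _ z(3,2)] by blast
  then show ?case using z Suc.prems(3)
    by (intro exI[of _ "z # ws"]) (auto simp: insert_commute)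
qed

lemma component_subset: "component n E a \<subseteq> {0..<n}"
  unfolding component_def by auto

lemma finite_component: "finite (component n E a)"
  by (rule finite_subset[OF component_subset]) simp

lemma component_self: "a < n \<Longrightarrow> a \<in> component n E a"
  unfolding component_def by auto

lemma component_step:
  "x \<in> component n E a \<Longrightarrow> {x, y} \<in> E \<Longrightarrow> y < n \<Longrightarrow> y \<in> component n E a"
  unfolding component_def by (auto intro: rtrancl_into_rtrancl)

lemma component_eq:
  assumes "b \<in> component n E a"
  shows "component n E b = component n E a"
proof -
  let ?R = "{(a, b). a < n \<and> b < n \<and> {a, b} \<in> E}"
  have "sym (?R\<^sup>*)"
    by (rule sym_rtrancl) (auto simp: sym_def insert_commute)
  moreover have ab: "(a, b) \<in> ?R\<^sup>*"
    using assms unfolding component_def by auto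
  ultimately have "(b, a) \<in> ?R\<^sup>*"
    by (rule symD)
  with ab show ?thesis
    unfolding component_def by (auto intro: rtrancl_trans)
qed

lemma walk_in_component:
  assumes "\<forall>a b. {a, b} \<in> E \<longrightarrow> a < n \<and> b < n"
  shows "is_walk E u \<Longrightarrow> u \<noteq> [] \<Longrightarrow> hd u \<in> component n E a \<Longrightarrow> set u \<subseteq> component n E a"
proof (induction u)
  case (Cons x xs)
  show ?case
  proof (cases xs)
    case (Cons y ys)
    have e: "{x, y} \<in> E" "is_walk E (y # ys)"
      using Cons \<open>is_walk E (x # xs)\<close> by auto
    have "y < n" using e(1) assms by blast
    then have "y \<in> component n E a"
      using component_step[OF _ e(1)] Cons.prems by simp
    then show ?thesis using Cons.IH Cons.prems e \<open>xs = y # ys\<close> by simp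
  qed (use Cons.prems in simp)
qed simp

lemma component_path_to_set:
  assumes "v \<in> component n E a" "a \<in> W" "v \<notin> W"
  obtains p where "p \<noteq> []" "hd p = v" "last p \<in> W" "distinct p"
    "\<forall>x\<in>set (butlast p). x \<notin> W" "is_walk E p"
proof -
  let ?P = "\<lambda>v p. p \<noteq> [] \<and> hd p = v \<and> last p \<in> W \<and> distinct p \<and>
              (\<forall>x\<in>set (butlast p). x \<notin> W) \<and> is_walk E p"
  have "(a, v) \<in> {(a, b). a < n \<and> b < n \<and> {a, b} \<in> E}\<^sup>*"
    using assms(1) unfolding component_def by blast
  then have "v \<in> W \<or> (\<exists>p. ?P v p)"
  proof (induction rule: rtrancl_induct)
    case (step u v)
    have e: "{v, u} \<in> E" using step(2) by (simp add: insert_commute)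
    consider "v \<in> W" | "v \<notin> W" "u \<in> W" | "v \<notin> W" "u \<notin> W" by blast
    then show ?case
    proof cases
      case 2
      then have "?P v [v, u]" using e by auto
      then show ?thesis by blast
    next
      case 3
      then have "\<exists>p. ?P u p" using step(3) by simp
      then obtain p where p: "?P u p" by blast
      show ?thesis
      proof (cases "v \<in> set p")
        case True
        then obtain xs ys where xs: "p = xs @ v # ys" by (meson split_list)
        then have "?P v (v # ys)"
          using p is_walk_append[of E xs v ys] by (simp add: butlast_append)
        then show ?thesis by blast
      next
        case False
        obtain ps where "p = u # ps" using p by (cases p) auto
        then have "?P v (v # p)" using p e False 3 by simp
        then show ?thesis by blast
      qed
    qed simp
  qed (use assms(2) in simp)
  then obtain p where "?P v p" using assms(3) by blast
  then show ?thesis using that by blast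
qed

section \<open>Escaping paths and returning walks\<close>

definition escaping_paths :: "nat \<Rightarrow> nat set \<Rightarrow> nat \<Rightarrow> nat list set" where
  "escaping_paths n W L = {u. length u = Suc L \<and> set u \<subseteq> {0..<n} \<and> hd u \<in> W \<and> distinct u \<and>
      (\<forall>x\<in>set (tl u). x \<notin> W)}"

text \<open>A returning walk leaves \<open>W\<close> along a path and then closes a cycle or re-enters \<open>W\<close>: one
  coincidence more than a path, which costs a factor \<open>1/n\<close> in expectation.\<close>

definition returning_walks :: "nat \<Rightarrow> nat set \<Rightarrow> nat \<Rightarrow> nat list set" where
  "returning_walks n W t = {u. length u = Suc t \<and> set u \<subseteq> {0..<n} \<and> hd u \<in> W \<and>
      distinct (take t u) \<and> (\<forall>i. 0 < i \<and> i < t \<longrightarrow> u ! i \<notin> W) \<and>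
      (u ! t \<in> W \<or> u ! t \<in> set (take t u)) \<and> u ! t \<noteq> u ! (t - 1) \<and> u ! t \<noteq> u ! (t - 2)}"

lemma distinct_iff_nth_notin_take:
  "distinct xs \<longleftrightarrow> (\<forall>t<length xs. xs ! t \<notin> set (take t xs))"
proof (induction xs rule: rev_induct)
  case (snoc x xs)
  have "(\<forall>t<length (xs @ [x]). (xs @ [x]) ! t \<notin> set (take t (xs @ [x]))) \<longleftrightarrow>
        (\<forall>t<length xs. xs ! t \<notin> set (take t xs)) \<and> x \<notin> set xs"
    by (auto simp: nth_append less_Suc_eq)
  then show ?case using snoc by simp
qed simp

lemma first_return_returning_walk:
  assumes len: "length u = Suc L" and t: "2 \<le> t" "t \<le> L"
    and ret: "u ! t \<in> W \<or> u ! t \<in> set (take t u)"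
    and first: "\<forall>s. 1 \<le> s \<and> s < t \<longrightarrow> u ! s \<notin> W \<and> u ! s \<notin> set (take s u)"
    and nb: "non_backtracking u" and walk: "is_walk E u" and loopfree: "\<forall>a b. {a, b} \<in> E \<longrightarrow> a \<noteq> b"
    and sub: "set u \<subseteq> {0..<n}" and hd: "hd u \<in> W"
  shows "take (Suc t) u \<in> returning_walks n W t"
proof -
  let ?u = "take (Suc t) u"
  have "distinct (take t u)" unfolding distinct_iff_nth_notin_take
  proof (intro allI impI)
    fix s assume s: "s < length (take t u)"
    then have "s = 0 \<or> u ! s \<notin> set (take s u)" using first by auto
    then show "take t u ! s \<notin> set (take s (take t u))" using s by auto
  qed
  moreover have "\<forall>i. 0 < i \<and> i < t \<longrightarrow> ?u ! i \<notin> W" using first by simp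
  moreover have "?u ! t \<in> W \<or> ?u ! t \<in> set (take t ?u)" using ret by simp
  moreover have "u ! t \<noteq> u ! (t - 1)"
  proof -
    have "Suc (t - 1) < length u" "Suc (t - 1) = t" using t len by simp_all
    then have "{u ! (t - 1), u ! t} \<in> E" using walk unfolding is_walk_iff_nth by metis
    then show ?thesis using loopfree by metis
  qed
  moreover have "u ! t \<noteq> u ! (t - 2)"
  proof -
    have "Suc (Suc (t - 2)) < length u" "Suc (Suc (t - 2)) = t" using t len by simp_all
    then show ?thesis using nb unfolding non_backtracking_iff_nth by metis
  qed
  moreover have "set ?u \<subseteq> {0..<n}"
    using sub by (meson in_set_takeD subset_iff)
  moreover have "hd ?u \<in> W" using hd by (cases u) auto
  moreover have "length ?u = Suc t" using len t by simp
  ultimately show ?thesis unfolding returning_walks_def by simp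
qed

text \<open>Cut a non-backtracking walk from \<open>W\<close> at its first self-intersection or return to \<open>W\<close>;
  if there is none, the whole walk is an escaping path.\<close>

lemma escaping_or_returning:
  assumes len: "length u = Suc L" and d: "1 \<le> d" "d \<le> L"
    and dist: "distinct (take (Suc d) u)" and notW: "\<forall>i. 1 \<le> i \<and> i \<le> d \<longrightarrow> u ! i \<notin> W"
    and nb: "non_backtracking u" and walk: "is_walk E u" and loopfree: "\<forall>a b. {a, b} \<in> E \<longrightarrow> a \<noteq> b"
    and sub: "set u \<subseteq> {0..<n}" and hd: "hd u \<in> W"
  shows "u \<in> escaping_paths n W L \<or> (\<exists>t. d < t \<and> t \<le> L \<and> take (Suc t) u \<in> returning_walks n W t)"
proof (cases "\<exists>t. 1 \<le> t \<and> t \<le> L \<and> (u ! t \<in> W \<or> u ! t \<in> set (take t u))")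
  case False
  have "distinct u" unfolding distinct_iff_nth_notin_take
  proof (intro allI impI)
    fix t assume "t < length u"
    then show "u ! t \<notin> set (take t u)" using False len by (cases t) auto
  qed
  moreover have "\<forall>x\<in>set (tl u). x \<notin> W"
  proof
    fix x assume "x \<in> set (tl u)"
    then obtain i where "i < length (tl u)" "tl u ! i = x" by (auto simp: in_set_conv_nth)
    then show "x \<notin> W" using False len by (auto simp: nth_tl)
  qed
  ultimately show ?thesis using len sub hd by (auto simp: escaping_paths_def)
next
  case True
  define P where "P t \<longleftrightarrow> 1 \<le> t \<and> t \<le> L \<and> (u ! t \<in> W \<or> u ! t \<in> set (take t u))" for t
  define t where "t = (LEAST t. P t)"
  have Pt: "P t" unfolding t_def using True P_def by (auto intro: LeastI_ex)
  have tL: "t \<le> L" using Pt unfolding P_def by simp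
  have "\<not> P s" if "s < t" for s using that not_less_Least unfolding t_def by blast
  then have first: "\<forall>s. 1 \<le> s \<and> s < t \<longrightarrow> u ! s \<notin> W \<and> u ! s \<notin> set (take s u)"
    using tL unfolding P_def by auto
  have "d < t"
  proof (rule ccontr)
    assume "\<not> d < t"
    then have "t < length (take (Suc d) u)" "t \<le> d" using d len by simp_all
    then have "take (Suc d) u ! t \<notin> set (take t (take (Suc d) u))"
      using dist unfolding distinct_iff_nth_notin_take by blast
    then have "u ! t \<notin> set (take t u)" using \<open>t \<le> d\<close> by simp
    then show False using notW Pt \<open>t \<le> d\<close> unfolding P_def by auto
  qed
  have "2 \<le> t" "u ! t \<in> W \<or> u ! t \<in> set (take t u)"
    using \<open>d < t\<close> d Pt unfolding P_def by auto
  then have "take (Suc t) u \<in> returning_walks n W t"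
    using first_return_returning_walk[OF len _ tL _ first nb walk loopfree sub hd] by blast
  with \<open>d < t\<close> tL show ?thesis by blast
qed

definition bad_vertices :: "nat \<Rightarrow> nat set \<Rightarrow> nat \<Rightarrow> nat set set \<Rightarrow> nat set" where
  "bad_vertices n W r G =
     (\<Union>d\<in>{1..n}. (\<lambda>u. u ! d) ` {u \<in> escaping_paths n W (d + r). is_walk G u}) \<union>
     (\<Union>t\<in>{2..n + r}. \<Union>d\<in>{1..<t}. (\<lambda>u. u ! d) ` {u \<in> returning_walks n W t. is_walk G u})"

definition bad_walk_count :: "nat \<Rightarrow> nat set \<Rightarrow> nat \<Rightarrow> nat set set \<Rightarrow> nat" where
  "bad_walk_count n W r G =
     (\<Sum>d=1..n. card {u \<in> escaping_paths n W (d + r). is_walk G u}) +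
     (\<Sum>t=2..n + r. (t - 1) * card {u \<in> returning_walks n W t. is_walk G u})"

lemma finite_lists_in_range: "finite {u :: nat list. length u = m \<and> set u \<subseteq> {0..<n}}"
  using finite_lists_length_eq[of "{0..<n}" m] by (simp add: conj_commute)

lemma finite_escaping_paths: "finite (escaping_paths n W L)"
  by (rule finite_subset[OF _ finite_lists_in_range[of "Suc L" n]]) (auto simp: escaping_paths_def)

lemma finite_returning_walks: "finite (returning_walks n W t)"
  by (rule finite_subset[OF _ finite_lists_in_range[of "Suc t" n]]) (auto simp: returning_walks_def)

lemma finite_bad_vertices: "finite (bad_vertices n W r G)"
  unfolding bad_vertices_def
  by (auto intro!: finite_imageI simp: finite_escaping_paths finite_returning_walks)

lemma card_bad_vertices_le: "card (bad_vertices n W r G) \<le> bad_walk_count n W r G"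
proof -
  let ?A = "\<lambda>d. {u \<in> escaping_paths n W (d + r). is_walk G u}"
  let ?B = "\<lambda>t. {u \<in> returning_walks n W t. is_walk G u}"
  have "card (\<Union>d\<in>{1..n}. (\<lambda>u. u ! d) ` ?A d) \<le> (\<Sum>d=1..n. card ((\<lambda>u. u ! d) ` ?A d))"
    by (rule card_UN_le) simp
  also have "\<dots> \<le> (\<Sum>d=1..n. card (?A d))"
    by (intro sum_mono card_image_le) (simp add: finite_escaping_paths)
  finally have A: "card (\<Union>d\<in>{1..n}. (\<lambda>u. u ! d) ` ?A d) \<le> (\<Sum>d=1..n. card (?A d))" .
  have B_t: "card (\<Union>d\<in>{1..<t}. (\<lambda>u. u ! d) ` ?B t) \<le> (t - 1) * card (?B t)" for t
  proof -
    have "card (\<Union>d\<in>{1..<t}. (\<lambda>u. u ! d) ` ?B t) \<le> (\<Sum>d\<in>{1..<t}. card ((\<lambda>u. u ! d) ` ?B t))"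
      by (rule card_UN_le) simp
    also have "\<dots> \<le> (\<Sum>d\<in>{1..<t}. card (?B t))"
      by (intro sum_mono card_image_le) (simp add: finite_returning_walks)
    finally show ?thesis by simp
  qed
  have "card (\<Union>t\<in>{2..n + r}. \<Union>d\<in>{1..<t}. (\<lambda>u. u ! d) ` ?B t)
      \<le> (\<Sum>t=2..n + r. card (\<Union>d\<in>{1..<t}. (\<lambda>u. u ! d) ` ?B t))"
    by (rule card_UN_le) simp
  also have "\<dots> \<le> (\<Sum>t=2..n + r. (t - 1) * card (?B t))"
    by (rule sum_mono) (rule B_t)
  finally have B: "card (\<Union>t\<in>{2..n + r}. \<Union>d\<in>{1..<t}. (\<lambda>u. u ! d) ` ?B t)
      \<le> (\<Sum>t=2..n + r. (t - 1) * card (?B t))" .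
  have "card (bad_vertices n W r G) \<le>
      card (\<Union>d\<in>{1..n}. (\<lambda>u. u ! d) ` ?A d) + card (\<Union>t\<in>{2..n + r}. \<Union>d\<in>{1..<t}. (\<lambda>u. u ! d) ` ?B t)"
    unfolding bad_vertices_def by (rule card_Un_le)
  then show ?thesis using A B unfolding bad_walk_count_def by linarith
qed

lemma rev_append_witness_walk:
  assumes p: "p = v # p1 # ps" "distinct p" "is_walk E p" "\<forall>x\<in>set (butlast p). x \<notin> W"
      "last p \<in> W" "set p \<subseteq> {0..<n}"
    and ws: "ws \<noteq> []" "is_walk E (v # ws)" "non_backtracking (v # ws)" "hd ws \<noteq> p1"
      "set ws \<subseteq> {0..<n}"
  defines "u \<equiv> rev p @ ws" and "d \<equiv> length p - 1"
  shows "length u = Suc (d + length ws)" "1 \<le> d" "d \<le> n" "u ! d = v"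
    "distinct (take (Suc d) u)" "\<forall>i. 1 \<le> i \<and> i \<le> d \<longrightarrow> u ! i \<notin> W"
    "non_backtracking u" "is_walk E u" "set u \<subseteq> {0..<n}" "hd u \<in> W"
proof -
  have u_eq: "u = rev (p1 # ps) @ v # ws" unfolding u_def using p(1) by simp
  have rev_p: "rev (p1 # ps) @ [v] = rev p" using p(1) by simp
  have u_nth: "u ! i = p ! (d - i)" if "i \<le> d" for i
  proof -
    have "i < length p" using that p(1) unfolding d_def by simp
    then show ?thesis unfolding u_def d_def by (simp add: nth_append rev_nth)
  qed
  show "length u = Suc (d + length ws)" "1 \<le> d"
    unfolding u_def d_def using p(1) by simp_all
  have "card (set p) \<le> card {0..<n}" by (rule card_mono) (use p(6) in auto)
  then show "d \<le> n" using distinct_card[OF p(2)] unfolding d_def by simp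
  show "u ! d = v" using u_nth[of d] p(1) by simp
  show "distinct (take (Suc d) u)"
    unfolding u_def d_def using p(1,2) by simp
  show "\<forall>i. 1 \<le> i \<and> i \<le> d \<longrightarrow> u ! i \<notin> W"
  proof (intro allI impI)
    fix i assume i: "1 \<le> i \<and> i \<le> d"
    then have "d - i < length (butlast p)" unfolding d_def using p(1) by simp
    then have "p ! (d - i) \<in> set (butlast p)"
      using nth_mem[of "d - i" "butlast p"] by (simp add: nth_butlast)
    then show "u ! i \<notin> W" using u_nth[of i] i p(4) by simp
  qed
  have "non_backtracking (rev (p1 # ps) @ [v])"
    unfolding rev_p using p(2) by (simp add: distinct_non_backtracking)
  then show "non_backtracking u"
    unfolding u_eq by (rule non_backtracking_append) (use ws(3,4) in \<open>simp_all add: last_rev\<close>)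
  have "is_walk E (rev (p1 # ps) @ [v])"
    unfolding rev_p is_walk_rev by (rule p(3))
  then show "is_walk E u"
    unfolding u_eq using is_walk_append[of E "rev (p1 # ps)" v ws] ws(2) by blast
  show "set u \<subseteq> {0..<n}" unfolding u_def using p(6) ws(5) by auto
  have "p \<noteq> []" using p(1) by simp
  then show "hd u \<in> W" unfolding u_def using p(5) by (simp add: hd_append2 hd_rev)
qed

section \<open>A random graph with a planted path\<close>

definition has_path_of_length :: "nat \<Rightarrow> nat set set \<Rightarrow> nat \<Rightarrow> bool" where
  "has_path_of_length n G k \<longleftrightarrow> (\<exists>xs. is_path n G xs \<and> length xs = k)"

definition peeled_core_event :: "nat \<Rightarrow> nat \<Rightarrow> nat \<Rightarrow> real \<Rightarrow> (nat set set \<times> nat set) set" where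
  "peeled_core_event n K r \<epsilon> = {(E, W). \<forall>xs. is_longest_path n E xs \<longrightarrow>
     (let C' = (peel E ^^ r) (component n E (hd xs))
      in \<bar>real (card C') - real K\<bar> \<le> \<epsilon> * real K \<and> \<bar>real (card (C' \<inter> W)) - real K\<bar> \<le> \<epsilon> * real K)}"

locale planted_path =
  fixes n K :: nat and f :: "nat \<Rightarrow> nat" and G0 :: "nat set set"
  assumes inj_f: "inj_on f {0..<K}" and f_range: "f ` {0..<K} \<subseteq> {0..<n}"
    and G0_pairs: "G0 \<subseteq> all_pairs n"
begin

abbreviation E :: "nat set set" where "E \<equiv> G0 \<union> path_edges K f"
abbreviation W :: "nat set" where "W \<equiv> f ` {0..<K}"
abbreviation C :: "nat set" where "C \<equiv> component n E (f 0)"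

lemma f_less: "i < K \<Longrightarrow> f i < n"
  using f_range by (auto simp: image_subset_iff)

lemma planted_edge: "Suc i < K \<Longrightarrow> {f i, f (Suc i)} \<in> E"
  unfolding path_edges_def by blast

lemma edge_proper:
  assumes "{a, b} \<in> E"
  shows "a \<noteq> b \<and> a < n \<and> b < n"
proof (cases "{a, b} \<in> G0")
  case True
  then obtain c d where "c < n" "d < n" "c \<noteq> d" "{a, b} = {c, d}"
    using G0_pairs unfolding all_pairs_def by blast
  then show ?thesis by (auto simp: doubleton_eq_iff)
next
  case False
  then obtain i where i: "Suc i < K" "{a, b} = {f i, f (Suc i)}"
    using assms unfolding path_edges_def by blast
  moreover have "f i \<noteq> f (Suc i)" using inj_f i(1) by (auto dest: inj_onD)
  moreover have "f i < n" "f (Suc i) < n" using f_less i(1) by auto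
  ultimately show ?thesis by (auto simp: doubleton_eq_iff)
qed

lemma edge_outside_W_in_G0:
  assumes "{a, b} \<in> E" "a \<notin> W"
  shows "{a, b} \<in> G0"
proof (rule ccontr)
  assume "{a, b} \<notin> G0"
  then obtain i where "Suc i < K" "{a, b} = {f i, f (Suc i)}"
    using assms(1) unfolding path_edges_def by blast
  then have "a \<in> W" by (auto simp: doubleton_eq_iff)
  then show False using assms(2) by simp
qed

lemma walk_outside_W_in_G0:
  assumes "is_walk E u" "\<forall>i. Suc i < length u \<longrightarrow> u ! i \<notin> W \<or> u ! Suc i \<notin> W"
  shows "is_walk G0 u"
  unfolding is_walk_iff_nth
proof (intro allI impI)
  fix i assume i: "Suc i < length u"
  have e: "{u ! i, u ! Suc i} \<in> E" "{u ! Suc i, u ! i} \<in> E"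
    using assms(1) i unfolding is_walk_iff_nth by (auto simp: insert_commute)
  show "{u ! i, u ! Suc i} \<in> G0"
  proof (cases "u ! i \<in> W")
    case True
    then have "{u ! Suc i, u ! i} \<in> G0"
      using assms(2) i edge_outside_W_in_G0[OF e(2)] by blast
    then show ?thesis by (simp add: insert_commute)
  qed (rule edge_outside_W_in_G0[OF e(1)])
qed

lemma planted_in_C: "i < K \<Longrightarrow> f i \<in> C"
proof (induction i)
  case 0
  then show ?case using component_self f_less by blast
next
  case (Suc i)
  then have "f i \<in> C" "{f i, f (Suc i)} \<in> E" "f (Suc i) < n"
    using planted_edge f_less by simp_all
  then show ?case by (rule component_step)
qed

lemma planted_survives: "j \<le> i \<Longrightarrow> i + j < K \<Longrightarrow> f i \<in> (peel E ^^ j) C"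
  by (rule path_vertex_survives_peel_iter[OF finite_component _ inj_f])
    (use planted_in_C planted_edge in auto)

lemma card_planted_core:
  assumes "2 * r < K"
  shows "K - 2 * r \<le> card ((peel E ^^ r) C \<inter> W)"
proof -
  have "f ` {r..<K - r} \<subseteq> (peel E ^^ r) C \<inter> W"
    using planted_survives assms by auto
  then have "card (f ` {r..<K - r}) \<le> card ((peel E ^^ r) C \<inter> W)"
    by (rule card_mono[rotated]) simp
  moreover have "inj_on f {r..<K - r}" using inj_f by (rule inj_on_subset) auto
  ultimately show ?thesis using assms by (simp add: card_image)
qed

lemma planted_subpath:
  assumes "b < K"
  shows "is_walk E (map f [a..<Suc b])" "distinct (map f [a..<Suc b])" "set (map f [a..<Suc b]) \<subseteq> W"
proof -
  have "inj_on f {a..<Suc b}" using inj_f by (rule inj_on_subset) (use assms in auto)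
  moreover have "{f (a + k), f (Suc (a + k))} \<in> E" if "Suc k < Suc b - a" for k
    using that assms by (intro planted_edge) linarith
  ultimately show "is_walk E (map f [a..<Suc b])" "distinct (map f [a..<Suc b])"
      "set (map f [a..<Suc b]) \<subseteq> W"
    using assms by (auto simp: is_walk_iff_nth distinct_map simp del: upt_Suc)
qed

lemma planted_segment:
  assumes "i < K" "j < K"
  obtains s where "s \<noteq> []" "hd s = f i" "last s = f j" "distinct s" "set s \<subseteq> W" "is_walk E s"
proof -
  have ends: "hd (map f [a..<Suc b]) = f a" "last (map f [a..<Suc b]) = f b" if "a \<le> b" for a b
    using that by (simp add: upt_conv_Cons del: upt_Suc, simp)
  show ?thesis
  proof (cases "i \<le> j")
    case True
    have "is_walk E (map f [i..<Suc j])" "distinct (map f [i..<Suc j])" "set (map f [i..<Suc j]) \<subseteq> W"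
      using planted_subpath[OF assms(2)] by blast+
    then show ?thesis
      by (intro that[of "map f [i..<Suc j]"]) (use ends[OF True] True in \<open>simp_all del: upt_Suc\<close>)
  next
    case False
    have "is_walk E (map f [j..<Suc i])" "distinct (map f [j..<Suc i])" "set (map f [j..<Suc i]) \<subseteq> W"
      using planted_subpath[OF assms(1)] by blast+
    then show ?thesis
      by (intro that[of "rev (map f [j..<Suc i])"])
        (use ends[of j i] False in \<open>simp_all add: is_walk_rev hd_rev last_rev del: upt_Suc\<close>)
  qed
qed

text \<open>Extending \<open>p\<close> along the planted path to \<open>f j\<close>, which survives \<open>j\<close> peelings, gives a path
  whose two ends both survive.\<close>

lemma path_into_W_survives:
  assumes "2 * j < K" "p \<noteq> []" "distinct p" "is_walk E p" "set p \<subseteq> C"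
    and "hd p \<in> (peel E ^^ j) C" "last p \<in> W" "\<forall>x\<in>set (butlast p). x \<notin> W"
  shows "set p \<subseteq> (peel E ^^ j) C"
proof -
  obtain i where i: "i < K" "last p = f i" using assms(7) by auto
  obtain s where s: "s \<noteq> []" "hd s = f i" "last s = f j" "distinct s" "set s \<subseteq> W" "is_walk E s"
    using planted_segment[OF i(1), of j] assms(1) by auto
  then obtain s' where s': "s = f i # s'" by (cases s) auto
  define q where "q = butlast p @ s"
  have p_eq: "butlast p @ [f i] = p" using assms(2) i(2) by (metis append_butlast_last_id)
  have walk: "is_walk E q"
    unfolding q_def s' using is_walk_append[of E "butlast p" "f i" s'] assms(4) s(6) p_eq s'
    by simp
  have dist: "distinct q"
    unfolding q_def using assms(3,8) s(4,5) by (auto simp: distinct_butlast)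
  have "set (butlast p) \<subseteq> C" using assms(5) by (meson in_set_butlastD subset_iff)
  moreover have "set s \<subseteq> C" using s(5) planted_in_C by auto
  ultimately have in_C: "set q \<subseteq> C" unfolding q_def by simp
  have "hd q = hd (butlast p @ [f i])" unfolding q_def s' by (cases "butlast p") simp_all
  then have "hd q \<in> (peel E ^^ j) C" using p_eq assms(6) by simp
  moreover have "last q \<in> (peel E ^^ j) C"
    unfolding q_def using s(1,3) planted_survives assms(1) by simp
  moreover have "q \<noteq> []" unfolding q_def using s(1) by simp
  ultimately have "set q \<subseteq> (peel E ^^ j) C"
    using path_survives_peel_iter[OF finite_component dist walk in_C] by blast
  moreover have "set p \<subseteq> set q"
  proof -
    have "set p = set (butlast p @ [f i])" using p_eq by simp
    then show ?thesis unfolding q_def s' by auto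
  qed
  ultimately show ?thesis by blast
qed

text \<open>A vertex \<open>v\<close> outside the planted path that survives \<open>r\<close> peelings sees two walks: a path
  back to the planted path and, since its first step \<open>p1\<close> survives \<open>r - 1\<close> peelings by the lemma
  above, a non-backtracking walk of length \<open>r\<close> that starts at a different neighbour.\<close>

lemma peeled_vertex_paths:
  assumes r: "1 \<le> r" "2 * r < K" and v: "v \<in> (peel E ^^ r) C" "v \<notin> W"
  obtains p1 ps ws where "distinct (v # p1 # ps)" "is_walk E (v # p1 # ps)"
    "\<forall>x\<in>set (butlast (v # p1 # ps)). x \<notin> W" "last (v # p1 # ps) \<in> W" "set (v # p1 # ps) \<subseteq> C"
    "length ws = r" "is_walk E (v # ws)" "non_backtracking (v # ws)" "hd ws \<noteq> p1" "set ws \<subseteq> C"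
proof -
  let ?T = "\<lambda>j. (peel E ^^ j) C"
  have edges: "\<forall>a b. {a, b} \<in> E \<longrightarrow> a < n \<and> b < n" using edge_proper by blast
  have vC: "v \<in> C" using v(1) peel_iter_subset by blast
  have "f 0 \<in> W" using r by auto
  then obtain p where p: "p \<noteq> []" "hd p = v" "last p \<in> W" "distinct p"
      "\<forall>x\<in>set (butlast p). x \<notin> W" "is_walk E p"
    using component_path_to_set[OF vC _ v(2)] by blast
  then obtain p1 ps where pp: "p = v # p1 # ps"
    using v(2) by (cases p; cases "tl p") auto
  have pC: "set p \<subseteq> C" using walk_in_component[OF edges p(6,1)] p(2) vC by simp
  have Tr: "?T r = peel E (?T (r - 1))" using r(1) by (cases r) simp_all
  have "v \<in> ?T (r - 1)" using v(1) peel_iter_antimono[of "r - 1" r] by auto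
  then have "set p \<subseteq> ?T (r - 1)"
    using path_into_W_survives[OF _ p(1,4,6) pC] p(2,3,5) r(2) by simp
  then have "p1 \<in> ?T (r - 1)" using pp by simp
  moreover have "p1 \<noteq> v" "{p1, v} \<in> E" using p(4,6) pp by (auto simp: insert_commute)
  ultimately obtain z where z: "z \<in> ?T (r - 1)" "z \<noteq> v" "{z, v} \<in> E" "z \<noteq> p1"
    using peel_other_neighbour[of v E "?T (r - 1)" p1] v(1) Tr by auto
  have "v \<in> ?T (r - 1 - 1)" using v(1) peel_iter_antimono[of "r - 1 - 1" r] by auto
  then obtain ws where ws: "length ws = r - 1" "is_walk E (v # z # ws)" "non_backtracking (v # z # ws)"
    using peel_iter_non_backtracking_walk[OF z(1)] z(2,3) by (auto simp: insert_commute)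
  have "set (v # z # ws) \<subseteq> C" using walk_in_component[OF edges ws(2)] vC by simp
  then show ?thesis
    using that[of p1 ps "z # ws"] p pp pC ws z(4) r(1) by auto
qed

lemma escaping_path_in_G0:
  assumes "u \<in> escaping_paths n W L" "is_walk E u"
  shows "is_walk G0 u"
proof (rule walk_outside_W_in_G0[OF assms(2)])
  show "\<forall>i. Suc i < length u \<longrightarrow> u ! i \<notin> W \<or> u ! Suc i \<notin> W"
  proof (intro allI impI)
    fix i assume "Suc i < length u"
    then have "u ! Suc i \<in> set (tl u)" by (cases u) auto
    then show "u ! i \<notin> W \<or> u ! Suc i \<notin> W" using assms(1) unfolding escaping_paths_def by blast
  qed
qed

lemma returning_walk_in_G0:
  assumes "u \<in> returning_walks n W t" "2 \<le> t" "is_walk E u"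
  shows "is_walk G0 u"
proof (rule walk_outside_W_in_G0[OF assms(3)])
  have inner: "\<forall>i. 0 < i \<and> i < t \<longrightarrow> u ! i \<notin> W" "length u = Suc t"
    using assms(1) unfolding returning_walks_def by blast+
  show "\<forall>i. Suc i < length u \<longrightarrow> u ! i \<notin> W \<or> u ! Suc i \<notin> W"
  proof (intro allI impI)
    fix i assume "Suc i < length u"
    then consider "Suc i < t" | "i = t - 1" "0 < i" using inner(2) assms(2) by linarith
    then show "u ! i \<notin> W \<or> u ! Suc i \<notin> W" using inner(1) by cases auto
  qed
qed

lemma witness_in_bad_vertices:
  assumes u: "length u = Suc (d + r)" "1 \<le> d" "d \<le> n" "distinct (take (Suc d) u)"
    "\<forall>i. 1 \<le> i \<and> i \<le> d \<longrightarrow> u ! i \<notin> W" "non_backtracking u" "is_walk E u"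
    "set u \<subseteq> {0..<n}" "hd u \<in> W"
  shows "u ! d \<in> bad_vertices n W r G0"
proof -
  have loopfree: "\<forall>a b. {a, b} \<in> E \<longrightarrow> a \<noteq> b" using edge_proper by blast
  have "u \<in> escaping_paths n W (d + r) \<or>
      (\<exists>t. d < t \<and> t \<le> d + r \<and> take (Suc t) u \<in> returning_walks n W t)"
    by (rule escaping_or_returning[OF u(1,2) _ u(4-7) loopfree u(8,9)]) simp
  then show ?thesis
  proof
    assume esc: "u \<in> escaping_paths n W (d + r)"
    then have "u ! d \<in> (\<lambda>u. u ! d) ` {u \<in> escaping_paths n W (d + r). is_walk G0 u}"
      using escaping_path_in_G0[OF esc u(7)] by blast
    moreover have "d \<in> {1..n}" using u(2,3) by simp
    ultimately show ?thesis unfolding bad_vertices_def by (intro UnI1 UN_I)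
  next
    assume "\<exists>t. d < t \<and> t \<le> d + r \<and> take (Suc t) u \<in> returning_walks n W t"
    then obtain t where t: "d < t" "t \<le> d + r" and ret: "take (Suc t) u \<in> returning_walks n W t"
      by blast
    have "2 \<le> t" using t(1) u(2) by simp
    then have "is_walk G0 (take (Suc t) u)"
      by (rule returning_walk_in_G0[OF ret _ is_walk_take[OF u(7)]])
    then have "u ! d \<in> (\<lambda>u. u ! d) ` {u \<in> returning_walks n W t. is_walk G0 u}"
      using ret t(1) by (intro image_eqI[where x = "take (Suc t) u"]) simp_all
    moreover have "t \<in> {2..n + r}" "d \<in> {1..<t}" using t u(2,3) by auto
    ultimately show ?thesis unfolding bad_vertices_def by (intro UnI2 UN_I)
  qed
qed

lemma peeled_outside_W_bad:
  assumes "1 \<le> r" "2 * r < K"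
  shows "(peel E ^^ r) C - W \<subseteq> bad_vertices n W r G0"
proof
  fix v assume v: "v \<in> (peel E ^^ r) C - W"
  then obtain p1 ps ws where p: "distinct (v # p1 # ps)" "is_walk E (v # p1 # ps)"
      "\<forall>x\<in>set (butlast (v # p1 # ps)). x \<notin> W" "last (v # p1 # ps) \<in> W" "set (v # p1 # ps) \<subseteq> C"
    and ws: "length ws = r" "is_walk E (v # ws)" "non_backtracking (v # ws)" "hd ws \<noteq> p1"
      "set ws \<subseteq> C"
    using peeled_vertex_paths[OF assms] by blast
  have "C \<subseteq> {0..<n}" by (rule component_subset)
  then have "set (v # p1 # ps) \<subseteq> {0..<n}" "set ws \<subseteq> {0..<n}" "ws \<noteq> []"
    using p(5) ws(1,5) assms(1) by auto
  note witness = rev_append_witness_walk[OF refl p(1-4) this(1) this(3) ws(2-4) this(2)]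
  show "v \<in> bad_vertices n W r G0"
    using witness_in_bad_vertices[OF witness(1-3,5-10)[unfolded ws(1)]] witness(4) by simp
qed

lemma longest_path_starts_in_C:
  assumes "0 < K" "\<not> has_path_of_length n G0 K" "is_longest_path n E xs"
  shows "hd xs \<in> C"
proof (rule ccontr)
  assume out: "hd xs \<notin> C"
  have xs: "xs \<noteq> []" "distinct xs" "set xs \<subseteq> {0..<n}" "is_walk E xs"
    and longest: "\<And>ys. is_path n E ys \<Longrightarrow> length ys \<le> length xs"
    using assms(3) unfolding is_longest_path_def is_path_iff_is_walk by auto
  have edges: "\<forall>a b. {a, b} \<in> E \<longrightarrow> a < n \<and> b < n" using edge_proper by blast
  have "hd xs < n" using xs(1,3) by (simp add: subset_iff)
  then have xs_comp: "set xs \<subseteq> component n E (hd xs)"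
    using walk_in_component[OF edges xs(4,1)] component_self by blast
  have "set xs \<inter> W = {}"
  proof (rule ccontr)
    assume "set xs \<inter> W \<noteq> {}"
    then obtain x where "x \<in> set xs" "x \<in> W" by blast
    then have "x \<in> set xs" "x \<in> C" using planted_in_C by auto
    then have "component n E x = component n E (hd xs)" "component n E x = C"
      using xs_comp component_eq by blast+
    then show False using out component_self \<open>hd xs < n\<close> by blast
  qed
  then have "\<forall>i. Suc i < length xs \<longrightarrow> xs ! i \<notin> W \<or> xs ! Suc i \<notin> W"
    using nth_mem[of _ xs] by blast
  then have walk_G0: "is_walk G0 xs" by (rule walk_outside_W_in_G0[OF xs(4)])
  have "is_path n E (map f [0..<K])"
  proof -
    have "[0..<K] = [0..<Suc (K - 1)]" using assms(1) by simp
    moreover have "W \<subseteq> {0..<n}" by (rule f_range)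
    ultimately show ?thesis
      using planted_subpath[of "K - 1" 0] assms(1) unfolding is_path_iff_is_walk by auto
  qed
  then have "K \<le> length xs" using longest by fastforce
  then have "is_path n G0 (take K xs) \<and> length (take K xs) = K"
    using xs walk_G0 assms(1) unfolding is_path_iff_is_walk
    by (auto simp: is_walk_take dest: in_set_takeD)
  then show False using assms(2) unfolding has_path_of_length_def by blast
qed

lemma in_peeled_core_event:
  assumes r: "1 \<le> r" "2 * r < K" "2 * real r \<le> \<epsilon> * real K"
    and no_path: "\<not> has_path_of_length n G0 K"
    and few_bad: "real (bad_walk_count n W r G0) < \<epsilon> * real K"
  shows "(E, W) \<in> peeled_core_event n K r \<epsilon>"
proof -
  have "\<bar>real (card ((peel E ^^ r) (component n E (hd xs)))) - real K\<bar> \<le> \<epsilon> * real K \<and>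
      \<bar>real (card ((peel E ^^ r) (component n E (hd xs)) \<inter> W)) - real K\<bar> \<le> \<epsilon> * real K"
    if "is_longest_path n E xs" for xs
  proof -
    have "hd xs \<in> C" using longest_path_starts_in_C[OF _ no_path that] r(2) by simp
    then have comp: "component n E (hd xs) = C" by (rule component_eq)
    define C' where "C' = (peel E ^^ r) C"
    have "finite C'" unfolding C'_def using finite_component peel_iter_subset by (rule finite_subset[rotated])
    then have split: "card C' = card (C' \<inter> W) + card (C' - W)" by (rule card_Int_Diff)
    have "card (C' - W) \<le> card (bad_vertices n W r G0)"
      unfolding C'_def using peeled_outside_W_bad[OF r(1,2)] by (rule card_mono[OF finite_bad_vertices])
    then have outside: "real (card (C' - W)) < \<epsilon> * real K"
      using card_bad_vertices_le[of n W r G0] few_bad by linarith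
    have "card (C' \<inter> W) \<le> card W" by (rule card_mono) auto
    then have inside_le: "card (C' \<inter> W) \<le> K" using inj_f by (simp add: card_image)
    have "K - 2 * r \<le> card (C' \<inter> W)" unfolding C'_def using card_planted_core r(2) .
    then have inside_ge: "real K - 2 * real r \<le> real (card (C' \<inter> W))" using r(2) by linarith
    show ?thesis
      unfolding comp C'_def[symmetric]
      using split outside inside_le inside_ge r(3) by linarith
  qed
  then show ?thesis unfolding peeled_core_event_def Let_def by simp
qed

end

section \<open>Expectations in the Erdos--Renyi graph\<close>

lemma finite_all_pairs: "finite (all_pairs n)"
  by (rule finite_subset[of _ "Pow {0..<n}"]) (auto simp: all_pairs_def)

lemma prob_erdos_renyi_superset:
  assumes p: "0 \<le> p" "p \<le> 1" and F: "F \<subseteq> all_pairs n"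
  shows "measure_pmf.prob (erdos_renyi n p) {G. F \<subseteq> G} = p ^ card F"
proof -
  let ?A = "all_pairs n"
  let ?B = "\<lambda>e. if e \<in> F then {True} else (UNIV :: bool set)"
  have eq: "{b. F \<subseteq> {e \<in> ?A. b e}} = Pi ?A ?B"
    using F by (auto simp: Pi_def)
  have "measure_pmf.prob (erdos_renyi n p) {G. F \<subseteq> G} =
        measure_pmf.prob (Pi_pmf ?A False (\<lambda>_. bernoulli_pmf p)) (Pi ?A ?B)"
    unfolding erdos_renyi_def by (simp add: eq)
  also have "\<dots> = (\<Prod>e\<in>?A. measure_pmf.prob (bernoulli_pmf p) (?B e))"
    by (rule measure_Pi_pmf_Pi) (rule finite_all_pairs)
  also have "\<dots> = (\<Prod>e\<in>?A. if e \<in> F then p else 1)"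
    by (intro prod.cong) (auto simp: measure_pmf_single p)
  also have "\<dots> = p ^ card F"
    using F by (simp add: prod.If_cases finite_all_pairs Int_absorb1)
  finally show ?thesis .
qed

lemma set_pmf_erdos_renyi: "set_pmf (erdos_renyi n p) \<subseteq> Pow (all_pairs n)"
  unfolding erdos_renyi_def by auto

lemma integrable_erdos_renyi: "integrable (measure_pmf (erdos_renyi n p)) (f :: nat set set \<Rightarrow> real)"
proof (rule integrable_measure_pmf_finite)
  show "finite (set_pmf (erdos_renyi n p))"
    by (rule finite_subset[OF set_pmf_erdos_renyi]) (simp add: finite_all_pairs)
qed

lemma edge_probability_bounds:
  assumes "0 \<le> lam" "lam \<le> 1" "0 < n"
  shows "0 \<le> lam / real n" "lam / real n \<le> 1"
  using assms by (auto simp: divide_le_eq)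

definition walk_edges :: "'a list \<Rightarrow> 'a set set" where
  "walk_edges u = (\<lambda>i. {u ! i, u ! Suc i}) ` {i. Suc i < length u}"

lemma is_walk_iff_walk_edges: "is_walk G u \<longleftrightarrow> walk_edges u \<subseteq> G"
  unfolding is_walk_iff_nth walk_edges_def by auto

text \<open>The exceptions \<open>u ! t = u ! (t - 1)\<close> and \<open>u ! t = u ! (t - 2)\<close> are exactly the ways the last
  step of a walk that is a path up to position \<open>t - 1\<close> can repeat an edge.\<close>

lemma card_walk_edges:
  assumes len: "length u = Suc t" and dist: "distinct (take t u)"
    and ne1: "1 \<le> t \<Longrightarrow> u ! t \<noteq> u ! (t - 1)" and ne2: "2 \<le> t \<Longrightarrow> u ! t \<noteq> u ! (t - 2)"
  shows "card (walk_edges u) = t"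
proof -
  have idx: "{i. Suc i < length u} = {0..<t}" using len by auto
  have dn: "u ! i \<noteq> u ! j" if "i < t" "j < t" "i \<noteq> j" for i j
    using nth_eq_iff_index_eq[OF dist, of i j] that len by simp
  have no_repeat: False if ab: "a < b" "b < t" and e: "{u ! a, u ! Suc a} = {u ! b, u ! Suc b}" for a b
  proof (cases "Suc b < t")
    case True
    then have "u ! a = u ! b \<or> u ! a = u ! Suc b" using e by (auto simp: doubleton_eq_iff)
    then show False using dn[of a b] dn[of a "Suc b"] ab True by auto
  next
    case False
    then have b: "b = t - 1" "Suc b = t" using ab by auto
    have "u ! a \<noteq> u ! b" using dn ab by simp
    then have last: "u ! a = u ! t" and shift: "u ! Suc a = u ! b"
      using e b by (auto simp: doubleton_eq_iff)
    have "Suc a = b" by (rule ccontr) (use dn[of "Suc a" b] shift ab in auto)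
    then have "a = t - 2" using b by simp
    then show False using ne2 last ab b by auto
  qed
  have "inj_on (\<lambda>i. {u ! i, u ! Suc i}) {0..<t}"
  proof (rule inj_onI)
    fix i j assume ij: "i \<in> {0..<t}" "j \<in> {0..<t}" "{u ! i, u ! Suc i} = {u ! j, u ! Suc j}"
    consider "i < j" | "i = j" | "j < i" by linarith
    then show "i = j"
    proof cases
      case 1
      then show ?thesis using no_repeat[of i j] ij by simp
    next
      case 3
      then show ?thesis using no_repeat[of j i] ij by simp
    qed
  qed
  then show ?thesis unfolding walk_edges_def idx by (simp add: card_image)
qed

lemma walk_edges_subset_all_pairs:
  assumes "set u \<subseteq> {0..<n}" "\<forall>i. Suc i < length u \<longrightarrow> u ! i \<noteq> u ! Suc i"
  shows "walk_edges u \<subseteq> all_pairs n"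
  unfolding walk_edges_def all_pairs_def
proof clarify
  fix i assume i: "Suc i < length u"
  have "u ! i < n" "u ! Suc i < n" using assms(1) i by (auto simp: subset_iff)
  then show "\<exists>a b. a < n \<and> b < n \<and> a \<noteq> b \<and> {u ! i, u ! Suc i} = {a, b}"
    using assms(2) i by blast
qed

lemma prob_erdos_renyi_walk:
  assumes p: "0 \<le> p" "p \<le> 1" and len: "length u = Suc t" and sub: "set u \<subseteq> {0..<n}"
    and dist: "distinct (take t u)"
    and ne1: "1 \<le> t \<Longrightarrow> u ! t \<noteq> u ! (t - 1)" and ne2: "2 \<le> t \<Longrightarrow> u ! t \<noteq> u ! (t - 2)"
  shows "measure_pmf.prob (erdos_renyi n p) {G. is_walk G u} = p ^ t"
proof -
  have "\<forall>i. Suc i < length u \<longrightarrow> u ! i \<noteq> u ! Suc i"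
  proof (intro allI impI)
    fix i assume i: "Suc i < length u"
    show "u ! i \<noteq> u ! Suc i"
    proof (cases "Suc i < t")
      case True
      then show ?thesis using nth_eq_iff_index_eq[OF dist, of i "Suc i"] len by simp
    next
      case False
      then have "Suc i = t" using i len by simp
      then show ?thesis using ne1 by force
    qed
  qed
  then show ?thesis
    using prob_erdos_renyi_superset[OF p walk_edges_subset_all_pairs[OF sub]]
      card_walk_edges[OF len dist ne1 ne2]
    by (simp add: is_walk_iff_walk_edges)
qed

lemma prob_erdos_renyi_distinct_walk:
  assumes p: "0 \<le> p" "p \<le> 1" and "length u = Suc t" "set u \<subseteq> {0..<n}" "distinct u"
  shows "measure_pmf.prob (erdos_renyi n p) {G. is_walk G u} = p ^ t"
  by (rule prob_erdos_renyi_walk[OF p assms(3,4)]) (use assms(3,5) in \<open>simp_all add: nth_eq_iff_index_eq\<close>)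

lemma expectation_card_erdos_renyi:
  assumes "finite A"
  shows "measure_pmf.expectation (erdos_renyi n p) (\<lambda>G. real (card {u \<in> A. Q G u})) =
         (\<Sum>u\<in>A. measure_pmf.prob (erdos_renyi n p) {G. Q G u})"
proof -
  have "real (card {u \<in> A. Q G u}) = (\<Sum>u\<in>A. indicator {G. Q G u} G)" for G
    using assms by (simp add: indicator_def sum.If_cases Int_def)
  then have "measure_pmf.expectation (erdos_renyi n p) (\<lambda>G. real (card {u \<in> A. Q G u})) =
        (\<Sum>u\<in>A. measure_pmf.expectation (erdos_renyi n p) (indicator {G. Q G u}))"
    by (simp add: Bochner_Integration.integral_sum integrable_erdos_renyi)
  then show ?thesis by simp
qed

lemma card_escaping_paths_le:
  assumes "finite W"
  shows "card (escaping_paths n W L) \<le> card W * n ^ L"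
proof -
  let ?X = "W \<times> {xs. set xs \<subseteq> {0..<n} \<and> length xs = L}"
  have fin: "finite ?X" using assms by (auto intro!: finite_cartesian_product finite_lists_length_eq)
  have "escaping_paths n W L \<subseteq> (\<lambda>(a, xs). a # xs) ` ?X"
  proof
    fix u assume "u \<in> escaping_paths n W L"
    then have u: "length u = Suc L" "set u \<subseteq> {0..<n}" "hd u \<in> W"
      unfolding escaping_paths_def by auto
    then obtain a xs where "u = a # xs" by (cases u) auto
    then show "u \<in> (\<lambda>(a, xs). a # xs) ` ?X" using u by auto
  qed
  then have "card (escaping_paths n W L) \<le> card ((\<lambda>(a, xs). a # xs) ` ?X)"
    by (rule card_mono[rotated]) (use fin in simp)
  also have "\<dots> \<le> card ?X" by (rule card_image_le[OF fin])
  also have "\<dots> = card W * n ^ L" by (simp add: card_cartesian_product card_lists_length_eq)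
  finally show ?thesis .
qed

lemma card_returning_walks_le:
  assumes "finite W" "1 \<le> t"
  shows "card (returning_walks n W t) \<le> card W * n ^ (t - 1) * (card W + t)"
proof -
  let ?X = "W \<times> {xs. set xs \<subseteq> {0..<n} \<and> length xs = t - 1}"
  let ?F = "\<lambda>(a, xs). (\<lambda>b. a # xs @ [b]) ` (W \<union> set (a # xs))"
  have fin: "finite ?X" using assms(1) by (auto intro!: finite_cartesian_product finite_lists_length_eq)
  have "returning_walks n W t \<subseteq> (\<Union>x\<in>?X. ?F x)"
  proof
    fix u assume "u \<in> returning_walks n W t"
    then have u: "length u = Suc t" "set u \<subseteq> {0..<n}" "hd u \<in> W"
        "u ! t \<in> W \<or> u ! t \<in> set (take t u)"
      unfolding returning_walks_def by auto
    have last: "u = take t u @ [u ! t]"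
      using u(1) by (metis lessI take_Suc_conv_app_nth take_all order_refl)
    have front: "take t u = hd u # take (t - 1) (tl u)"
      using u(1) assms(2) by (cases u; cases t) auto
    have "set (take (t - 1) (tl u)) \<subseteq> set u" by (cases u) (auto dest: in_set_takeD)
    then have "(hd u, take (t - 1) (tl u)) \<in> ?X" using u(1-3) assms(2) by auto
    moreover have "u \<in> ?F (hd u, take (t - 1) (tl u))"
      using u(4) front last by (auto intro: image_eqI[where x = "u ! t"])
    ultimately show "u \<in> (\<Union>x\<in>?X. ?F x)" by blast
  qed
  then have "card (returning_walks n W t) \<le> card (\<Union>x\<in>?X. ?F x)"
    by (rule card_mono[rotated]) (use fin assms(1) in auto)
  also have "\<dots> \<le> (\<Sum>x\<in>?X. card (?F x))" by (rule card_UN_le[OF fin])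
  also have "\<dots> \<le> (\<Sum>x\<in>?X. card W + t)"
  proof (rule sum_mono)
    fix x assume x: "x \<in> ?X"
    obtain a xs where x_eq: "x = (a, xs)" by (cases x)
    have "card (?F x) \<le> card (W \<union> set (a # xs))" unfolding x_eq prod.case
      by (rule card_image_le) (use assms(1) in simp)
    also have "\<dots> \<le> card W + card (set (a # xs))" by (rule card_Un_le)
    also have "\<dots> \<le> card W + length (a # xs)" using card_length by (rule add_left_mono)
    also have "\<dots> = card W + t" using x x_eq assms(2) by simp
    finally show "card (?F x) \<le> card W + t" .
  qed
  also have "\<dots> = card W * n ^ (t - 1) * (card W + t)"
    by (simp add: card_cartesian_product card_lists_length_eq)
  finally show ?thesis .
qed

lemma expectation_escaping_paths_le:
  assumes "finite W" "0 \<le> lam" "lam \<le> 1" "0 < n"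
  shows "measure_pmf.expectation (erdos_renyi n (lam / real n))
           (\<lambda>G. real (card {u \<in> escaping_paths n W L. is_walk G u})) \<le> real (card W) * lam ^ L"
proof -
  let ?p = "lam / real n"
  have p: "0 \<le> ?p" "?p \<le> 1" using edge_probability_bounds assms(2-4) by blast+
  have "measure_pmf.expectation (erdos_renyi n ?p)
          (\<lambda>G. real (card {u \<in> escaping_paths n W L. is_walk G u}))
        = (\<Sum>u\<in>escaping_paths n W L. measure_pmf.prob (erdos_renyi n ?p) {G. is_walk G u})"
    by (rule expectation_card_erdos_renyi[OF finite_escaping_paths])
  also have "\<dots> = real (card (escaping_paths n W L)) * ?p ^ L"
    by (simp add: escaping_paths_def prob_erdos_renyi_distinct_walk[OF p])
  also have "\<dots> \<le> real (card W * n ^ L) * ?p ^ L"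
  proof (rule mult_right_mono)
    show "real (card (escaping_paths n W L)) \<le> real (card W * n ^ L)"
      using card_escaping_paths_le[OF assms(1)] by (simp only: of_nat_le_iff)
  qed (simp add: p(1))
  also have "\<dots> = real (card W) * lam ^ L"
    using assms(4) by (simp add: power_divide)
  finally show ?thesis .
qed

lemma expectation_returning_walks_le:
  assumes "finite W" "0 \<le> lam" "lam \<le> 1" "0 < n" "2 \<le> t"
  shows "measure_pmf.expectation (erdos_renyi n (lam / real n))
           (\<lambda>G. real (card {u \<in> returning_walks n W t. is_walk G u}))
         \<le> real (card W) * (real (card W) + real t) * lam ^ t / real n"
proof -
  let ?p = "lam / real n"
  have p: "0 \<le> ?p" "?p \<le> 1" using edge_probability_bounds assms(2-4) by blast+
  have "measure_pmf.expectation (erdos_renyi n ?p)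
          (\<lambda>G. real (card {u \<in> returning_walks n W t. is_walk G u}))
        = (\<Sum>u\<in>returning_walks n W t. measure_pmf.prob (erdos_renyi n ?p) {G. is_walk G u})"
    by (rule expectation_card_erdos_renyi[OF finite_returning_walks])
  also have "\<dots> = real (card (returning_walks n W t)) * ?p ^ t"
    by (simp add: returning_walks_def prob_erdos_renyi_walk[OF p])
  also have "\<dots> \<le> real (card W * n ^ (t - 1) * (card W + t)) * ?p ^ t"
  proof (rule mult_right_mono)
    show "real (card (returning_walks n W t)) \<le> real (card W * n ^ (t - 1) * (card W + t))"
      using card_returning_walks_le[OF assms(1)] assms(5) by (simp only: of_nat_le_iff)
  qed (simp add: p(1))
  also have "\<dots> = real (card W) * (real (card W) + real t) * (real n ^ (t - 1) * ?p ^ t)"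
    by (simp add: mult_ac)
  also have "real n ^ (t - 1) * ?p ^ t = lam ^ t / real n"
  proof -
    obtain s where "t = Suc s" using assms(5) by (cases t) auto
    then show ?thesis using assms(4) by (simp add: power_divide)
  qed
  finally show ?thesis by simp
qed

definition expected_bad_walks :: "nat \<Rightarrow> nat \<Rightarrow> nat \<Rightarrow> real \<Rightarrow> real" where
  "expected_bad_walks n K r lam = (\<Sum>d=1..n. real K * lam ^ (d + r)) +
     (\<Sum>t=2..n + r. real (t - 1) * (real K * (real K + real t) * lam ^ t / real n))"

lemma expectation_bad_walk_count_le:
  assumes "finite W" "card W = K" "0 \<le> lam" "lam \<le> 1" "0 < n"
  shows "measure_pmf.expectation (erdos_renyi n (lam / real n)) (\<lambda>G. real (bad_walk_count n W r G))
     \<le> expected_bad_walks n K r lam"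
proof -
  let ?M = "erdos_renyi n (lam / real n)"
  let ?a = "\<lambda>d G. real (card {u \<in> escaping_paths n W (d + r). is_walk G u})"
  let ?b = "\<lambda>t G. real (t - 1) * real (card {u \<in> returning_walks n W t. is_walk G u})"
  have "measure_pmf.expectation ?M (\<lambda>G. real (bad_walk_count n W r G)) =
        measure_pmf.expectation ?M (\<lambda>G. (\<Sum>d=1..n. ?a d G) + (\<Sum>t=2..n + r. ?b t G))"
    unfolding bad_walk_count_def by (simp add: of_nat_sum)
  also have "\<dots> = (\<Sum>d=1..n. measure_pmf.expectation ?M (?a d)) +
        (\<Sum>t=2..n + r. measure_pmf.expectation ?M (?b t))"
    by (simp add: Bochner_Integration.integral_add Bochner_Integration.integral_sum integrable_erdos_renyi)
  also have "(\<Sum>d=1..n. measure_pmf.expectation ?M (?a d)) \<le> (\<Sum>d=1..n. real K * lam ^ (d + r))"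
    by (rule sum_mono) (use expectation_escaping_paths_le assms in auto)
  also have "(\<Sum>t=2..n + r. measure_pmf.expectation ?M (?b t)) \<le>
        (\<Sum>t=2..n + r. real (t - 1) * (real K * (real K + real t) * lam ^ t / real n))"
  proof (rule sum_mono)
    fix t assume "t \<in> {2..n + r}"
    then have "measure_pmf.expectation ?M (\<lambda>G. real (card {u \<in> returning_walks n W t. is_walk G u}))
        \<le> real K * (real K + real t) * lam ^ t / real n"
      using expectation_returning_walks_le[OF assms(1,3-5), of t] assms(2) by simp
    then have "real (t - 1) * measure_pmf.expectation ?M
          (\<lambda>G. real (card {u \<in> returning_walks n W t. is_walk G u}))
        \<le> real (t - 1) * (real K * (real K + real t) * lam ^ t / real n)"
      by (rule mult_left_mono) simp
    then show "measure_pmf.expectation ?M (?b t) \<le>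
        real (t - 1) * (real K * (real K + real t) * lam ^ t / real n)"
      by simp
  qed
  finally show ?thesis unfolding expected_bad_walks_def by simp
qed

lemma prob_has_path_of_length_le:
  assumes "0 \<le> lam" "lam \<le> 1" "0 < n" "1 \<le> k"
  shows "measure_pmf.prob (erdos_renyi n (lam / real n)) {G. has_path_of_length n G k}
           \<le> real n * lam ^ (k - 1)"
proof -
  let ?p = "lam / real n"
  have p: "0 \<le> ?p" "?p \<le> 1" using edge_probability_bounds assms(1-3) by blast+
  define L where "L = {u. length u = k \<and> distinct u \<and> set u \<subseteq> {0..<n}}"
  have fin: "finite L" unfolding L_def
    by (rule finite_subset[OF _ finite_lists_in_range[of k n]]) auto
  have "{G. has_path_of_length n G k} \<subseteq> (\<Union>u\<in>L. {G. is_walk G u})"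
    unfolding has_path_of_length_def is_path_iff_is_walk L_def by auto
  then have "measure_pmf.prob (erdos_renyi n ?p) {G. has_path_of_length n G k} \<le>
      measure_pmf.prob (erdos_renyi n ?p) (\<Union>u\<in>L. {G. is_walk G u})"
    by (rule measure_pmf.finite_measure_mono) simp
  also have "\<dots> \<le> (\<Sum>u\<in>L. measure_pmf.prob (erdos_renyi n ?p) {G. is_walk G u})"
    by (rule measure_pmf.finite_measure_subadditive_finite[OF fin]) simp
  also have "\<dots> = real (card L) * ?p ^ (k - 1)"
  proof -
    have "measure_pmf.prob (erdos_renyi n ?p) {G. is_walk G u} = ?p ^ (k - 1)" if "u \<in> L" for u
      using that assms(4) unfolding L_def by (intro prob_erdos_renyi_distinct_walk[OF p]) auto
    then show ?thesis by simp
  qed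
  also have "\<dots> \<le> real (n ^ k) * ?p ^ (k - 1)"
  proof -
    have "card L \<le> card {u :: nat list. set u \<subseteq> {0..<n} \<and> length u = k}"
      by (rule card_mono) (auto simp: L_def intro: finite_lists_length_eq)
    then show ?thesis using p(1) by (intro mult_right_mono) (simp_all add: card_lists_length_eq)
  qed
  also have "\<dots> = real n * lam ^ (k - 1)"
  proof -
    obtain s where "k = Suc s" using assms(4) by (cases k) auto
    then show ?thesis using assms(3) by (simp add: power_divide)
  qed
  finally show ?thesis .
qed

lemma prob_not_peeled_core_event_le:
  assumes f: "inj_on f {0..<K}" "f ` {0..<K} \<subseteq> {0..<n}"
    and lam: "0 \<le> lam" "lam \<le> 1" and n: "0 < n"
    and r: "1 \<le> r" "2 * r < K" "2 * real r \<le> \<epsilon> * real K" and \<epsilon>: "0 < \<epsilon>"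
  shows "measure_pmf.prob (erdos_renyi n (lam / real n))
           {G0. (G0 \<union> path_edges K f, f ` {0..<K}) \<notin> peeled_core_event n K r \<epsilon>}
     \<le> real n * lam ^ (K - 1) + expected_bad_walks n K r lam / (\<epsilon> * real K)"
proof -
  define M where "M = erdos_renyi n (lam / real n)"
  define W where "W = f ` {0..<K}"
  define Bad where "Bad = {G0. (G0 \<union> path_edges K f, W) \<notin> peeled_core_event n K r \<epsilon>}"
  define Long where "Long = {G. has_path_of_length n G K}"
  define Many where "Many = {G. \<epsilon> * real K \<le> real (bad_walk_count n W r G)}"
  have \<epsilon>K: "0 < \<epsilon> * real K" using \<epsilon> r(2) by simp
  have "Bad \<inter> set_pmf M \<subseteq> Long \<union> Many"
  proof
    fix G0 assume G0: "G0 \<in> Bad \<inter> set_pmf M"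
    then interpret planted_path n K f G0
      using f set_pmf_erdos_renyi unfolding M_def by unfold_locales blast+
    show "G0 \<in> Long \<union> Many"
      using G0 in_peeled_core_event[OF r] unfolding Bad_def Long_def Many_def W_def by force
  qed
  then have "measure_pmf.prob M Bad \<le> measure_pmf.prob M (Long \<union> Many)"
    by (subst measure_Int_set_pmf[symmetric]) (rule measure_pmf.finite_measure_mono, simp_all)
  also have "\<dots> \<le> measure_pmf.prob M Long + measure_pmf.prob M Many"
    by (rule measure_subadditive) (simp_all add: measure_pmf.emeasure_eq_measure)
  also have "measure_pmf.prob M Long \<le> real n * lam ^ (K - 1)"
    unfolding M_def Long_def by (rule prob_has_path_of_length_le) (use lam n r in simp_all)
  also have "measure_pmf.prob M Many =
      measure M {G \<in> space M. \<epsilon> * real K \<le> real (bad_walk_count n W r G)}"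
    unfolding Many_def by simp
  also have "\<dots> \<le> measure_pmf.expectation M (\<lambda>G. real (bad_walk_count n W r G)) / (\<epsilon> * real K)"
    by (rule integral_Markov_inequality_measure[OF _ _ _ \<epsilon>K]) (auto simp: M_def integrable_erdos_renyi)
  also have "\<dots> \<le> expected_bad_walks n K r lam / (\<epsilon> * real K)"
    using expectation_bad_walk_count_le[of W K lam n r] f(1) lam n \<epsilon>K
    unfolding M_def W_def by (intro divide_right_mono) (simp_all add: card_image)
  finally show ?thesis unfolding M_def Bad_def W_def by simp
qed

lemma prob_pair_pmf_ge:
  assumes "\<And>b. b \<in> set_pmf B \<Longrightarrow> measure_pmf.prob A {a. \<not> P a b} \<le> \<delta>"
  shows "1 - \<delta> \<le> measure_pmf.prob (pair_pmf A B) {(a, b). P a b}"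
proof -
  have "emeasure (pair_pmf A B) {(a, b). \<not> P a b} = emeasure (pair_pmf B A) {(b, a). \<not> P a b}"
    by (subst pair_commute_pmf) (simp add: vimage_def case_prod_unfold)
  also have "\<dots> = (\<integral>\<^sup>+ b. \<integral>\<^sup>+ a. indicator {(b, a). \<not> P a b} (b, a) \<partial>A \<partial>B)"
    by (subst nn_integral_indicator[symmetric]) (simp_all add: nn_integral_pair_pmf')
  also have "\<dots> = (\<integral>\<^sup>+ b. emeasure A {a. \<not> P a b} \<partial>B)"
    by (intro nn_integral_cong) (simp add: nn_integral_indicator[symmetric] indicator_def)
  also have "\<dots> \<le> (\<integral>\<^sup>+ b. ennreal \<delta> \<partial>B)"
    using assms by (intro nn_integral_mono_AE)
      (auto simp: AE_measure_pmf_iff measure_pmf.emeasure_eq_measure intro!: ennreal_leI)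
  also have "\<dots> = ennreal \<delta>" by (simp add: measure_pmf.emeasure_space_1)
  finally have "emeasure (pair_pmf A B) {(a, b). \<not> P a b} \<le> ennreal \<delta>" .
  moreover have "0 \<le> \<delta>"
  proof -
    obtain b where "b \<in> set_pmf B" using set_pmf_not_empty[of B] by blast
    then show ?thesis using assms[of b] measure_nonneg[of "measure_pmf A"] by (meson order_trans)
  qed
  ultimately have "measure_pmf.prob (pair_pmf A B) {(a, b). \<not> P a b} \<le> \<delta>"
    by (simp add: measure_pmf.emeasure_eq_measure)
  moreover have "{(a, b). \<not> P a b} = space (measure_pmf (pair_pmf A B)) - {(a, b). P a b}" by auto
  ultimately show ?thesis using measure_pmf.prob_compl[of "{(a, b). P a b}" "pair_pmf A B"] by simp
qed

lemma set_pmf_random_injection: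
  assumes "K \<le> n"
  shows "set_pmf (random_injection n K) = {f. f \<in> {0..<K} \<rightarrow>\<^sub>E {0..<n} \<and> inj_on f {0..<K}}"
proof -
  have "finite {f. f \<in> {0..<K} \<rightarrow>\<^sub>E {0..<n} \<and> inj_on f {0..<K}}"
    by (rule finite_subset[of _ "{0..<K} \<rightarrow>\<^sub>E {0..<n}"]) (auto intro: finite_PiE)
  moreover have "restrict id {0..<K} \<in> {f. f \<in> {0..<K} \<rightarrow>\<^sub>E {0..<n} \<and> inj_on f {0..<K}}"
    using assms by (auto simp: inj_on_def)
  then have "{f. f \<in> {0..<K} \<rightarrow>\<^sub>E {0..<n} \<and> inj_on f {0..<K}} \<noteq> {}" by blast
  ultimately show ?thesis unfolding random_injection_def by simp
qed

lemma summable_quadratic_times_power: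
  fixes x :: real assumes "\<bar>x\<bar> < 1"
  shows "summable (\<lambda>t. real (Suc t) * real (Suc (Suc t)) * x ^ t)"
proof -
  have "summable (\<lambda>n. real (Suc n) * y ^ n)" if "norm y < 1" for y :: real
    using termdiff_converges[OF that, of "\<lambda>_. 1"] by (simp add: diffs_def summable_geometric)
  then have "summable (\<lambda>n. diffs (\<lambda>n. real (Suc n)) n * x ^ n)"
    by (intro termdiff_converges[of x 1]) (use assms in auto)
  then show ?thesis by (simp add: diffs_def mult.assoc)
qed

lemma expected_bad_walks_le:
  fixes lam :: real
  assumes lam: "0 \<le> lam" "lam < 1" and K: "1 \<le> K"
  defines "S \<equiv> (\<Sum>t. real (Suc t) * real (Suc (Suc t)) * lam ^ t)"
  shows "expected_bad_walks n K r lam \<le> real K * (lam ^ r / (1 - lam) + (real K + 1) / real n * S)"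
proof -
  let ?g = "\<lambda>t. real (Suc t) * real (Suc (Suc t)) * lam ^ t"
  have "(\<Sum>d=1..n. lam ^ d) \<le> (\<Sum>d. lam ^ d)"
    by (rule sum_le_suminf) (use lam in \<open>auto intro: summable_geometric\<close>)
  also have "\<dots> = 1 / (1 - lam)" using suminf_geometric[of lam] lam by simp
  finally have "real K * lam ^ r * (\<Sum>d=1..n. lam ^ d) \<le> real K * lam ^ r * (1 / (1 - lam))"
    by (rule mult_left_mono) (use lam in simp)
  then have T1: "(\<Sum>d=1..n. real K * lam ^ (d + r)) \<le> real K * lam ^ r / (1 - lam)"
    by (simp add: sum_distrib_left power_add mult_ac)
  have "(\<Sum>t=2..n + r. real (t - 1) * (real K * (real K + real t) * lam ^ t / real n))
        \<le> (\<Sum>t=2..n + r. real K * (real K + 1) / real n * ?g t)"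
  proof (rule sum_mono)
    fix t
    have "real (t - 1) * (real K + real t) \<le> real (Suc t) * ((real K + 1) * real (Suc (Suc t)))"
      by (rule mult_mono) (use K in \<open>auto simp: algebra_simps\<close>)
    then have "real (t - 1) * (real K + real t) * (real K * lam ^ t / real n) \<le>
               real (Suc t) * ((real K + 1) * real (Suc (Suc t))) * (real K * lam ^ t / real n)"
      by (rule mult_right_mono) (use lam in simp)
    then show "real (t - 1) * (real K * (real K + real t) * lam ^ t / real n)
        \<le> real K * (real K + 1) / real n * ?g t"
      by (simp add: mult_ac)
  qed
  also have "\<dots> = real K * (real K + 1) / real n * (\<Sum>t=2..n + r. ?g t)"
    by (simp add: sum_distrib_left)
  also have "\<dots> \<le> real K * (real K + 1) / real n * S"
    unfolding S_def using summable_quadratic_times_power[of lam] lam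
    by (intro mult_left_mono sum_le_suminf) auto
  finally have T2: "(\<Sum>t=2..n + r. real (t - 1) * (real K * (real K + real t) * lam ^ t / real n))
      \<le> real K * (real K + 1) / real n * S" .
  have "real K * (lam ^ r / (1 - lam) + (real K + 1) / real n * S) =
      real K * lam ^ r / (1 - lam) + real K * (real K + 1) / real n * S"
    by (simp add: distrib_left)
  then show ?thesis using T1 T2 unfolding expected_bad_walks_def by linarith
qed

lemma prob_peeled_core_event_ge:
  fixes lam \<epsilon> :: real
  assumes lam: "0 < lam" "lam < 1" and n: "0 < n" "K \<le> n"
    and r: "1 \<le> r" "2 * r < K" "2 * real r \<le> \<epsilon> * real K" and \<epsilon>: "0 < \<epsilon>"
  defines "S \<equiv> (\<Sum>t. real (Suc t) * real (Suc (Suc t)) * lam ^ t)"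
  shows "1 - (real n * lam ^ (K - 1) + lam ^ r / ((1 - lam) * \<epsilon>) + (real K + 1) / real n * (S / \<epsilon>))
         \<le> measure_pmf.prob (model_P1 n lam K) (peeled_core_event n K r \<epsilon>)"
proof -
  have "1 - (real n * lam ^ (K - 1) + expected_bad_walks n K r lam / (\<epsilon> * real K))
      \<le> measure_pmf.prob (pair_pmf (erdos_renyi n (lam / real n)) (random_injection n K))
          {(G0, f). (G0 \<union> path_edges K f, f ` {0..<K}) \<in> peeled_core_event n K r \<epsilon>}"
  proof (rule prob_pair_pmf_ge)
    fix f assume "f \<in> set_pmf (random_injection n K)"
    then have "inj_on f {0..<K}" "f ` {0..<K} \<subseteq> {0..<n}"
      using set_pmf_random_injection[OF n(2)] by (auto simp: PiE_def Pi_def)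
    then show "measure_pmf.prob (erdos_renyi n (lam / real n))
        {G0. (G0 \<union> path_edges K f, f ` {0..<K}) \<notin> peeled_core_event n K r \<epsilon>}
      \<le> real n * lam ^ (K - 1) + expected_bad_walks n K r lam / (\<epsilon> * real K)"
      using prob_not_peeled_core_event_le lam n(1) r \<epsilon> by simp
  qed
  also have "\<dots> = measure_pmf.prob (model_P1 n lam K) (peeled_core_event n K r \<epsilon>)"
    unfolding model_P1_def by (simp add: vimage_def case_prod_unfold)
  finally have A: "1 - (real n * lam ^ (K - 1) + expected_bad_walks n K r lam / (\<epsilon> * real K))
      \<le> measure_pmf.prob (model_P1 n lam K) (peeled_core_event n K r \<epsilon>)" .
  have "expected_bad_walks n K r lam / (\<epsilon> * real K)
      \<le> real K * (lam ^ r / (1 - lam) + (real K + 1) / real n * S) / (\<epsilon> * real K)"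
    using expected_bad_walks_le[of lam K n r] lam r(2) \<epsilon> unfolding S_def
    by (intro divide_right_mono) simp_all
  also have "\<dots> = lam ^ r / ((1 - lam) * \<epsilon>) + (real K + 1) / real n * (S / \<epsilon>)"
    using r(2) by (simp add: add_divide_distrib)
  finally show ?thesis using A by linarith
qed

section \<open>Asymptotics\<close>

lemma K_tendsto_top:
  assumes lam: "0 < lam" "lam < 1"
    and K: "filterlim (\<lambda>n. real (K n) - ln (real n) / ln (1 / lam)) at_top sequentially"
  shows "filterlim (\<lambda>n. real (K n)) at_top sequentially"
proof (rule filterlim_at_top_mono[OF K])
  show "\<forall>\<^sub>F n in sequentially. real (K n) - ln (real n) / ln (1 / lam) \<le> real (K n)"
    using eventually_ge_at_top[of "1::nat"]
    by eventually_elim (use lam in \<open>simp add: divide_nonneg_pos\<close>)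
qed

text \<open>This is where \<open>K = ln n / ln (1/\<lambda>) + \<omega>(1)\<close> enters: it makes the expected number of paths
  with \<open>K\<close> vertices in \<open>G(n, \<lambda>/n)\<close>, which is at most \<open>n \<lambda>\<^sup>K\<^sup>-\<^sup>1\<close>, tend to zero.\<close>

lemma n_times_power_K_tendsto_0:
  assumes lam: "0 < lam" "lam < 1"
    and K: "filterlim (\<lambda>n. real (K n) - ln (real n) / ln (1 / lam)) at_top sequentially"
  shows "(\<lambda>n. real n * lam ^ (K n - 1)) \<longlonglongrightarrow> 0"
proof -
  define c where "c = ln (1 / lam)"
  have c: "0 < c" using lam unfolding c_def by simp
  define X where "X n = real (K n) - ln (real n) / c" for n
  have "filterlim (\<lambda>n. c * X n) at_top sequentially"
    using filterlim_tendsto_pos_mult_at_top[OF tendsto_const c K] unfolding X_def c_def by simp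
  then have "filterlim (\<lambda>n. exp (c * X n)) at_top sequentially"
    by (rule filterlim_compose[OF exp_at_top])
  then have lim: "(\<lambda>n. exp c * inverse (exp (c * X n))) \<longlonglongrightarrow> 0"
    by (intro tendsto_mult_right_zero tendsto_inverse_0_at_top)
  have "\<forall>\<^sub>F n in sequentially. exp c * inverse (exp (c * X n)) = real n * lam ^ (K n - 1)"
    using eventually_ge_at_top[of "1::nat"]
      filterlim_at_top_dense[THEN iffD1, OF K_tendsto_top[OF lam K], rule_format, of 1]
  proof eventually_elim
    case (elim n)
    have "ln lam = - c" unfolding c_def using lam by (simp add: ln_div)
    have "exp c * inverse (exp (c * X n)) = exp (c - c * X n)" by (simp add: exp_diff field_simps)
    also have "c - c * X n = ln (real n) + real (K n - 1) * ln lam"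
      unfolding X_def \<open>ln lam = - c\<close> using c elim(2) by (simp add: field_simps of_nat_diff)
    also have "exp \<dots> = real n * lam ^ (K n - 1)"
      using elim(1) lam by (simp add: exp_add exp_of_nat_mult)
    finally show ?case .
  qed
  then show ?thesis by (rule Lim_transform_eventually[OF lim])
qed

lemma floor_sqrt_tendsto_top:
  assumes K: "filterlim (\<lambda>n. real (K n)) at_top sequentially"
  shows "filterlim (\<lambda>n. nat \<lfloor>sqrt (real (K n))\<rfloor>) at_top sequentially"
  unfolding filterlim_at_top
proof
  fix Z :: nat
  have "\<forall>\<^sub>F n in sequentially. (real Z + 1)\<^sup>2 \<le> real (K n)"
    using K unfolding filterlim_at_top by blast
  then show "\<forall>\<^sub>F n in sequentially. Z \<le> nat \<lfloor>sqrt (real (K n))\<rfloor>"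
  proof eventually_elim
    case (elim n)
    then have "sqrt ((real Z + 1)\<^sup>2) \<le> sqrt (real (K n))" by (rule real_sqrt_le_mono)
    then have "int Z \<le> \<lfloor>sqrt (real (K n))\<rfloor>" by (simp add: le_floor_iff)
    then show ?case by simp
  qed
qed

lemma K_over_n_tendsto_0:
  assumes "(\<lambda>n. real (K n) / (real n / ln (real n))) \<longlonglongrightarrow> 0"
  shows "(\<lambda>n. (real (K n) + 1) / real n) \<longlonglongrightarrow> 0"
proof -
  have "(\<lambda>n. real (K n) / (real n / ln (real n)) * (1 / ln (real n)) + 1 / real n) \<longlonglongrightarrow> 0 * 0 + 0"
    by (intro tendsto_add tendsto_mult assms) real_asymp+
  moreover have "\<forall>\<^sub>F n in sequentially.
      real (K n) / (real n / ln (real n)) * (1 / ln (real n)) + 1 / real n = (real (K n) + 1) / real n"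
    using eventually_ge_at_top[of "2::nat"]
  proof eventually_elim
    case (elim n)
    then have "0 < ln (real n)" by simp
    then show ?case using elim by (simp add: field_simps)
  qed
  ultimately show ?thesis using Lim_transform_eventually by fastforce
qed

lemma floor_sqrt_bounds:
  fixes \<epsilon> :: real
  assumes \<epsilon>: "0 < \<epsilon>" and k: "5 + (2 / \<epsilon>)\<^sup>2 \<le> real k"
  shows "2 * nat \<lfloor>sqrt (real k)\<rfloor> < k" "2 * real (nat \<lfloor>sqrt (real k)\<rfloor>) \<le> \<epsilon> * real k"
proof -
  define s where "s = sqrt (real k)"
  have s: "0 \<le> s" "s * s = real k" unfolding s_def by simp_all
  have r: "real (nat \<lfloor>s\<rfloor>) \<le> s" using s(1) by linarith
  have "5 \<le> real k" using k zero_le_power2[of "2 / \<epsilon>"] by linarith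
  then have "sqrt 5 \<le> s" unfolding s_def by (rule real_sqrt_le_mono)
  moreover have "2 < sqrt (5::real)" by (simp add: real_less_rsqrt)
  ultimately have "2 * s < s * s" using s(1) by (simp add: mult_strict_right_mono)
  then have "real (2 * nat \<lfloor>s\<rfloor>) < real k" using r s(2) by simp
  then show "2 * nat \<lfloor>sqrt (real k)\<rfloor> < k" unfolding s_def by (simp only: of_nat_less_iff)
  have "sqrt ((2 / \<epsilon>)\<^sup>2) \<le> s" unfolding s_def using k by (intro real_sqrt_le_mono) simp
  then have "2 \<le> \<epsilon> * s" using \<epsilon> by (simp add: divide_le_eq mult.commute)
  then have "2 * s \<le> \<epsilon> * s * s" using s(1) by (simp add: mult_right_mono)
  then have "2 * real (nat \<lfloor>s\<rfloor>) \<le> \<epsilon> * real k" using r s(2) by (simp add: mult.assoc)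
  then show "2 * real (nat \<lfloor>sqrt (real k)\<rfloor>) \<le> \<epsilon> * real k" unfolding s_def .
qed

lemma eventually_peeling_depth_admissible:
  fixes \<epsilon> :: real
  assumes K: "filterlim (\<lambda>n. real (K n)) at_top sequentially"
    and K_small: "(\<lambda>n. (real (K n) + 1) / real n) \<longlonglongrightarrow> 0" and \<epsilon>: "0 < \<epsilon>"
  defines "r n \<equiv> nat \<lfloor>sqrt (real (K n))\<rfloor>"
  shows "\<forall>\<^sub>F n in sequentially. 0 < n \<and> K n \<le> n \<and> 1 \<le> r n \<and> 2 * r n < K n \<and>
           2 * real (r n) \<le> \<epsilon> * real (K n)"
proof -
  have "\<forall>\<^sub>F n in sequentially. (real (K n) + 1) / real n < 1"
    using K_small by (rule order_tendstoD) simp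
  moreover have "\<forall>\<^sub>F n in sequentially. 1 \<le> r n"
    using floor_sqrt_tendsto_top[OF K] unfolding r_def filterlim_at_top by blast
  moreover have "\<forall>\<^sub>F n in sequentially. 5 + (2 / \<epsilon>)\<^sup>2 \<le> real (K n)"
    using K unfolding filterlim_at_top by blast
  ultimately show ?thesis using eventually_gt_at_top[of "0::nat"]
    by eventually_elim (use floor_sqrt_bounds[OF \<epsilon>] in \<open>auto simp: r_def field_simps\<close>)
qed

lemma failure_bound_tendsto_0:
  fixes \<epsilon> c :: real
  assumes lam: "0 < lam" "lam < 1" and \<epsilon>: "0 < \<epsilon>"
    and K_large: "filterlim (\<lambda>n. real (K n) - ln (real n) / ln (1 / lam)) at_top sequentially"
    and K_small: "(\<lambda>n. (real (K n) + 1) / real n) \<longlonglongrightarrow> 0"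
  shows "(\<lambda>n. real n * lam ^ (K n - 1) + lam ^ nat \<lfloor>sqrt (real (K n))\<rfloor> / ((1 - lam) * \<epsilon>) +
            (real (K n) + 1) / real n * (c / \<epsilon>)) \<longlonglongrightarrow> 0"
proof -
  have "(\<lambda>n. lam ^ nat \<lfloor>sqrt (real (K n))\<rfloor>) \<longlonglongrightarrow> 0"
    by (rule filterlim_compose[OF LIMSEQ_power_zero floor_sqrt_tendsto_top[OF K_tendsto_top[OF lam K_large]]])
      (use lam in simp)
  then have peeled: "(\<lambda>n. lam ^ nat \<lfloor>sqrt (real (K n))\<rfloor> / ((1 - lam) * \<epsilon>)) \<longlonglongrightarrow> 0"
    by (rule tendsto_divide_zero)
  have bad: "(\<lambda>n. (real (K n) + 1) / real n * (c / \<epsilon>)) \<longlonglongrightarrow> 0"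
    using K_small by (rule tendsto_mult_left_zero)
  show ?thesis
    using tendsto_add[OF tendsto_add[OF n_times_power_K_tendsto_0[OF lam K_large] peeled] bad] by simp
qed

lemma prob_peeled_core_event_tendsto_1:
  fixes \<epsilon> :: real
  assumes lam: "0 < lam" "lam < 1"
    and K_large: "filterlim (\<lambda>n. real (K n) - ln (real n) / ln (1 / lam)) at_top sequentially"
    and K_small: "(\<lambda>n. real (K n) / (real n / ln (real n))) \<longlonglongrightarrow> 0" and \<epsilon>: "0 < \<epsilon>"
  shows "(\<lambda>n. measure_pmf.prob (model_P1 n lam (K n))
           (peeled_core_event n (K n) (nat \<lfloor>sqrt (real (K n))\<rfloor>) \<epsilon>)) \<longlonglongrightarrow> 1"
proof -
  define r where "r n = nat \<lfloor>sqrt (real (K n))\<rfloor>" for n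
  define S where "S = (\<Sum>t. real (Suc t) * real (Suc (Suc t)) * lam ^ t)"
  define P where "P n = measure_pmf.prob (model_P1 n lam (K n)) (peeled_core_event n (K n) (r n) \<epsilon>)" for n
  define b where "b n = real n * lam ^ (K n - 1) + lam ^ r n / ((1 - lam) * \<epsilon>) +
      (real (K n) + 1) / real n * (S / \<epsilon>)" for n
  have K_over_n: "(\<lambda>n. (real (K n) + 1) / real n) \<longlonglongrightarrow> 0"
    using K_small by (rule K_over_n_tendsto_0)
  have "b \<longlonglongrightarrow> 0"
    unfolding b_def r_def by (rule failure_bound_tendsto_0[OF lam \<epsilon> K_large K_over_n])
  then have lower_lim: "(\<lambda>n. 1 - b n) \<longlonglongrightarrow> 1 - 0" by (intro tendsto_diff tendsto_const)
  have bound: "1 - b n \<le> P n"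
    if "0 < n" "K n \<le> n" "1 \<le> r n" "2 * r n < K n" "2 * real (r n) \<le> \<epsilon> * real (K n)" for n
    unfolding P_def b_def S_def by (rule prob_peeled_core_event_ge[OF lam that \<epsilon>])
  have lower: "\<forall>\<^sub>F n in sequentially. 1 - b n \<le> P n"
    using eventually_peeling_depth_admissible[OF K_tendsto_top[OF lam K_large] K_over_n \<epsilon>]
    unfolding r_def[symmetric] by (rule eventually_mono) (use bound in blast)
  have "\<forall>\<^sub>F n in sequentially. P n \<le> 1" by (simp add: P_def)
  then have "P \<longlonglongrightarrow> 1" by (rule tendsto_sandwich[OF lower _ lower_lim[simplified] tendsto_const])
  then show ?thesis unfolding P_def r_def .
qed

theorem lemma5:
  fixes lam :: real and K :: "nat \<Rightarrow> nat"
  assumes "0 < lam" and "lam < 1"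
    and "filterlim (\<lambda>n. real (K n) - ln (real n) / ln (1 / lam)) at_top sequentially"
    and "(\<lambda>n. real (K n) / (real n / ln (real n))) \<longlonglongrightarrow> 0"
  shows "\<forall>\<epsilon>>0. (\<lambda>n. measure_pmf.prob (model_P1 n lam (K n))
           {(E, W). \<forall>xs. is_longest_path n E xs \<longrightarrow>
              (let C' = (peel E ^^ nat \<lfloor>sqrt (real (K n))\<rfloor>) (component n E (hd xs))
               in \<bar>real (card C') - real (K n)\<bar> \<le> \<epsilon> * real (K n) \<and>
                  \<bar>real (card (C' \<inter> W)) - real (K n)\<bar> \<le> \<epsilon> * real (K n))})
         \<longlonglongrightarrow> 1"
  using prob_peeled_core_event_tendsto_1[OF assms] unfolding peeled_core_event_def by blast

end
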